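(* Let $R$ be an arithmetic ring. Then any two pure-composition series of a finitely generated $R$-module, both with cyclic factors and with totally ordered annihilator sequences, are isomorphic.
   Context: All rings are commutative with identity. $R$ is arithmetic if $R_P$ is a valuation ring for every maximal ideal $P$. A pure-composition series of $M$ is a finite chain $\{0\}=M_0\subset\dots\subset M_n=M$ of pure submodules (pure: the inclusion stays injective after tensoring with any module). Its annihilator sequence is $(A_i)$ with $A_i=\mathrm{ann}(M_i/M_{i-1})$; it is totally ordered if $A_i,A_j$ are comparable under inclusion for all $i,j$. Two such series are isomorphic if there is a bijection between their sets of factors $M_i/M_{i-1}$ such that corresponding factors are isomorphic. *)

theory Defs
  imports "HOL-Algebra.Module" "HOL-Algebra.QuotRing"
begin

definition frac_rel :: "('r, 'm) ring_scheme \<Rightarrow> 'r set \<Rightarrow> 'r \<times> 'r \<Rightarrow> 'r \<times> 'r \<Rightarrow> bool" where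
  "frac_rel R S p q \<longleftrightarrow>
     (\<exists>w\<in>S. w \<otimes>\<^bsub>R\<^esub> (fst p \<otimes>\<^bsub>R\<^esub> snd q \<ominus>\<^bsub>R\<^esub> fst q \<otimes>\<^bsub>R\<^esub> snd p) = \<zero>\<^bsub>R\<^esub>)"

definition frac :: "('r, 'm) ring_scheme \<Rightarrow> 'r set \<Rightarrow> 'r \<Rightarrow> 'r \<Rightarrow> ('r \<times> 'r) set" where
  "frac R S a s = {q \<in> carrier R \<times> S. frac_rel R S (a, s) q}"

definition rep :: "'b set \<Rightarrow> 'b" where "rep U = (SOME x. x \<in> U)"

definition localization :: "('r, 'm) ring_scheme \<Rightarrow> 'r set \<Rightarrow> ('r \<times> 'r) set ring" where
  "localization R S =
    \<lparr> carrier = {frac R S a s | a s. a \<in> carrier R \<and> s \<in> S},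
      mult = (\<lambda>U V. frac R S (fst (rep U) \<otimes>\<^bsub>R\<^esub> fst (rep V)) (snd (rep U) \<otimes>\<^bsub>R\<^esub> snd (rep V))),
      one = frac R S \<one>\<^bsub>R\<^esub> \<one>\<^bsub>R\<^esub>,
      zero = frac R S \<zero>\<^bsub>R\<^esub> \<one>\<^bsub>R\<^esub>,
      add = (\<lambda>U V. frac R S (fst (rep U) \<otimes>\<^bsub>R\<^esub> snd (rep V) \<oplus>\<^bsub>R\<^esub> fst (rep V) \<otimes>\<^bsub>R\<^esub> snd (rep U))
                     (snd (rep U) \<otimes>\<^bsub>R\<^esub> snd (rep V))) \<rparr>"

text \<open>Valuation ring (in the sense of the paper, possibly with zero divisors):
  the ideals are totally ordered by inclusion.\<close>
definition valuation_ring :: "('b, 'n) ring_scheme \<Rightarrow> bool" where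
  "valuation_ring L \<longleftrightarrow> (\<forall>I J. ideal I L \<and> ideal J L \<longrightarrow> I \<subseteq> J \<or> J \<subseteq> I)"

definition arithmetic :: "('r, 'm) ring_scheme \<Rightarrow> bool" where
  "arithmetic R \<longleftrightarrow>
     (\<forall>P. maximalideal P R \<longrightarrow> valuation_ring (localization R (carrier R - P)))"

definition fin_gen :: "'r ring \<Rightarrow> ('r, 'a) module \<Rightarrow> bool" where
  "fin_gen R M \<longleftrightarrow> (\<exists>S. finite S \<and> S \<subseteq> carrier M \<and>
      carrier M = \<Inter>{H. submodule H R M \<and> S \<subseteq> H})"

definition quot_mod :: "'r ring \<Rightarrow> ('r, 'a) module \<Rightarrow> 'a set \<Rightarrow> ('r, 'a set) module" where
  "quot_mod R M N =
    \<lparr> carrier = a_rcosets\<^bsub>M\<^esub> N,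
      mult = (\<lambda>U V. N),
      one = N,
      zero = N,
      add = set_add M,
      smult = (\<lambda>r U. N +>\<^bsub>M\<^esub> (r \<odot>\<^bsub>M\<^esub> rep U)) \<rparr>"

definition cyclic_mod :: "'r ring \<Rightarrow> ('r, 'b) module \<Rightarrow> bool" where
  "cyclic_mod R Q \<longleftrightarrow> (\<exists>g\<in>carrier Q. carrier Q = {r \<odot>\<^bsub>Q\<^esub> g | r. r \<in> carrier R})"

definition ann :: "'r ring \<Rightarrow> ('r, 'b) module \<Rightarrow> 'r set" where
  "ann R Q = {r \<in> carrier R. \<forall>x\<in>carrier Q. r \<odot>\<^bsub>Q\<^esub> x = \<zero>\<^bsub>Q\<^esub>}"

definition mod_iso :: "'r ring \<Rightarrow> ('r, 'b) module \<Rightarrow> ('r, 'c) module \<Rightarrow> bool" where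
  "mod_iso R A B \<longleftrightarrow> (\<exists>f. bij_betw f (carrier A) (carrier B) \<and>
      (\<forall>x\<in>carrier A. \<forall>y\<in>carrier A. f (x \<oplus>\<^bsub>A\<^esub> y) = f x \<oplus>\<^bsub>B\<^esub> f y) \<and>
      (\<forall>r\<in>carrier R. \<forall>x\<in>carrier A. f (r \<odot>\<^bsub>A\<^esub> x) = r \<odot>\<^bsub>B\<^esub> f x))"

definition delta :: "'r ring \<Rightarrow> 'p \<Rightarrow> 'p \<Rightarrow> 'r" where
  "delta R q p = (if p = q then \<one>\<^bsub>R\<^esub> else \<zero>\<^bsub>R\<^esub>)"

text \<open>Generators of the relation submodule of the free module on carrier M \<times> carrier U;
  M \<otimes>_R U is the free module modulo their span.  Elements of the free module are
  finitely supported functions  'a \<times> 'x \<Rightarrow> 'r.\<close>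
definition tensor_gens :: "'r ring \<Rightarrow> ('r, 'a) module \<Rightarrow> ('r, 'x) module \<Rightarrow> ('a \<times> 'x \<Rightarrow> 'r) set" where
  "tensor_gens R M U =
     {(\<lambda>p. delta R (m \<oplus>\<^bsub>M\<^esub> m', x) p \<ominus>\<^bsub>R\<^esub> delta R (m, x) p \<ominus>\<^bsub>R\<^esub> delta R (m', x) p)
        | m m' x. m \<in> carrier M \<and> m' \<in> carrier M \<and> x \<in> carrier U}
   \<union> {(\<lambda>p. delta R (m, x \<oplus>\<^bsub>U\<^esub> x') p \<ominus>\<^bsub>R\<^esub> delta R (m, x) p \<ominus>\<^bsub>R\<^esub> delta R (m, x') p)
        | m x x'. m \<in> carrier M \<and> x \<in> carrier U \<and> x' \<in> carrier U}
   \<union> {(\<lambda>p. delta R (r \<odot>\<^bsub>M\<^esub> m, x) p \<ominus>\<^bsub>R\<^esub> r \<otimes>\<^bsub>R\<^esub> delta R (m, x) p)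
        | r m x. r \<in> carrier R \<and> m \<in> carrier M \<and> x \<in> carrier U}
   \<union> {(\<lambda>p. delta R (m, r \<odot>\<^bsub>U\<^esub> x) p \<ominus>\<^bsub>R\<^esub> r \<otimes>\<^bsub>R\<^esub> delta R (m, x) p)
        | r m x. r \<in> carrier R \<and> m \<in> carrier M \<and> x \<in> carrier U}"

inductive_set fun_span :: "'r ring \<Rightarrow> ('p \<Rightarrow> 'r) set \<Rightarrow> ('p \<Rightarrow> 'r) set"
  for R :: "'r ring" and G :: "('p \<Rightarrow> 'r) set" where
  zero: "(\<lambda>_. \<zero>\<^bsub>R\<^esub>) \<in> fun_span R G"
| step: "\<lbrakk>f \<in> fun_span R G; c \<in> carrier R; g \<in> G\<rbrakk>
          \<Longrightarrow> (\<lambda>p. f p \<oplus>\<^bsub>R\<^esub> c \<otimes>\<^bsub>R\<^esub> g p) \<in> fun_span R G"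

text \<open>The element of the free module over carrier M \<times> carrier U represented by f is zero
  in M \<otimes>_R U.\<close>
definition tensor_zero :: "'r ring \<Rightarrow> ('r, 'a) module \<Rightarrow> ('r, 'x) module \<Rightarrow> ('a \<times> 'x \<Rightarrow> 'r) \<Rightarrow> bool" where
  "tensor_zero R M U f \<longleftrightarrow> f \<in> fun_span R (tensor_gens R M U)"

text \<open>N is a pure submodule of M: N \<otimes> U \<rightarrow> M \<otimes> U is injective for every R-module U,
  i.e. every element of N \<otimes> U (represented by a finitely supported f on N \<times> U) that
  becomes zero in M \<otimes> U is already zero in N \<otimes> U.  Test modules U are taken with
  carrier type (nat \<Rightarrow> 'r) set, which contains copies of all finitely presented modules.\<close>
definition pure_sub :: "'r ring \<Rightarrow> ('r, 'a) module \<Rightarrow> 'a set \<Rightarrow> bool" where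
  "pure_sub R M N \<longleftrightarrow> submodule N R M \<and>
     (\<forall>U :: ('r, (nat \<Rightarrow> 'r) set) module. module R U \<longrightarrow>
       (\<forall>f. (\<forall>p. f p \<in> carrier R) \<and> finite {p. f p \<noteq> \<zero>\<^bsub>R\<^esub>} \<and>
            {p. f p \<noteq> \<zero>\<^bsub>R\<^esub>} \<subseteq> N \<times> carrier U \<longrightarrow>
            tensor_zero R M U f \<longrightarrow> tensor_zero R (M\<lparr>carrier := N\<rparr>) U f))"

definition pc_series :: "'r ring \<Rightarrow> ('r, 'a) module \<Rightarrow> nat \<Rightarrow> (nat \<Rightarrow> 'a set) \<Rightarrow> bool" where
  "pc_series R M n Ms \<longleftrightarrow>
     Ms 0 = {\<zero>\<^bsub>M\<^esub>} \<and> Ms n = carrier M \<and>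
     (\<forall>i\<in>{1..n}. Ms (i - 1) \<subset> Ms i) \<and>
     (\<forall>i\<le>n. pure_sub R M (Ms i))"

definition factor :: "'r ring \<Rightarrow> ('r, 'a) module \<Rightarrow> (nat \<Rightarrow> 'a set) \<Rightarrow> nat \<Rightarrow> ('r, 'a set) module" where
  "factor R M Ms i = quot_mod R (M\<lparr>carrier := Ms i\<rparr>) (Ms (i - 1))"

definition ann_tot_ordered :: "'r ring \<Rightarrow> ('r, 'a) module \<Rightarrow> nat \<Rightarrow> (nat \<Rightarrow> 'a set) \<Rightarrow> bool" where
  "ann_tot_ordered R M n Ms \<longleftrightarrow>
     (\<forall>i\<in>{1..n}. \<forall>j\<in>{1..n}. ann R (factor R M Ms i) \<subseteq> ann R (factor R M Ms j)
                            \<or> ann R (factor R M Ms j) \<subseteq> ann R (factor R M Ms i))"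

definition series_iso :: "'r ring \<Rightarrow> ('r, 'a) module \<Rightarrow> nat \<Rightarrow> (nat \<Rightarrow> 'a set) \<Rightarrow> nat \<Rightarrow> (nat \<Rightarrow> 'a set) \<Rightarrow> bool" where
  "series_iso R M n Ms m Ns \<longleftrightarrow>
     (\<exists>\<sigma>. bij_betw \<sigma> {1..n} {1..m} \<and>
        (\<forall>i\<in>{1..n}. mod_iso R (factor R M Ms i) (factor R M Ns (\<sigma> i))))"

end

theory Submission
  imports Defs
begin

text \<open>Fix a maximal ideal \<open>P\<close> and \<open>a \<in> R\<close>. For a pure series with \<open>M\<^sub>i = M\<^sub>i\<^sub>-\<^sub>1 + R g\<^sub>i\<close>,
  the submodules \<open>T\<^sub>i = a M\<^sub>i + (a P) M\<close> form a chain in the modular lattice of submodules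
  whose steps are trivial or covers, since \<open>T\<^sub>i = T\<^sub>i\<^sub>-\<^sub>1 + R a g\<^sub>i\<close> and \<open>P a g\<^sub>i \<subseteq> T\<^sub>i\<^sub>-\<^sub>1\<close>.
  Purity, used only in the form \<open>J M \<inter> M\<^sub>i = J M\<^sub>i\<close> for ideals \<open>J\<close> (tensor with \<open>R/J\<close>),
  shows that step \<open>i\<close> is proper iff \<open>(A\<^sub>i : a) \<subseteq> P\<close>, where \<open>A\<^sub>i = ann (M\<^sub>i / M\<^sub>i\<^sub>-\<^sub>1)\<close>.
  By Jordan-Hoelder the number of such \<open>i\<close> depends only on \<open>M\<close>. When the \<open>A\<^sub>i\<close> are totally
  ordered these numbers determine, for each \<open>a\<close>, how many \<open>A\<^sub>i\<close> avoid \<open>a\<close>, hence the family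
  \<open>(A\<^sub>i)\<close> up to reindexing; and cyclic modules with equal annihilators are isomorphic.\<close>

section \<open>Jordan-Hoelder counting in modular lattices of sets\<close>

locale modular_set_lattice =
  fixes F :: "'a set set" and jn :: "'a set \<Rightarrow> 'a set \<Rightarrow> 'a set"
  assumes Int_closed: "X \<in> F \<Longrightarrow> Y \<in> F \<Longrightarrow> X \<inter> Y \<in> F"
    and jn_closed: "X \<in> F \<Longrightarrow> Y \<in> F \<Longrightarrow> jn X Y \<in> F"
    and jn_upper1: "X \<in> F \<Longrightarrow> Y \<in> F \<Longrightarrow> X \<subseteq> jn X Y"
    and jn_upper2: "X \<in> F \<Longrightarrow> Y \<in> F \<Longrightarrow> Y \<subseteq> jn X Y"
    and jn_least: "X \<in> F \<Longrightarrow> Y \<in> F \<Longrightarrow> Z \<in> F \<Longrightarrow> X \<subseteq> Z \<Longrightarrow> Y \<subseteq> Z \<Longrightarrow> jn X Y \<subseteq> Z"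
    and modular: "X \<in> F \<Longrightarrow> Y \<in> F \<Longrightarrow> Z \<in> F \<Longrightarrow> X \<subseteq> Z \<Longrightarrow> jn X Y \<inter> Z = jn X (Y \<inter> Z)"
begin

definition covers :: "'a set \<Rightarrow> 'a set \<Rightarrow> bool" where
  "covers X Y \<longleftrightarrow> X \<subset> Y \<and> (\<forall>Z\<in>F. X \<subseteq> Z \<and> Z \<subseteq> Y \<longrightarrow> Z = X \<or> Z = Y)"

definition cover_chain :: "(nat \<Rightarrow> 'a set) \<Rightarrow> nat \<Rightarrow> bool" where
  "cover_chain T k \<longleftrightarrow> (\<forall>i\<le>k. T i \<in> F) \<and> (\<forall>i<k. T i = T (Suc i) \<or> covers (T i) (T (Suc i)))"

definition jumps :: "(nat \<Rightarrow> 'a set) \<Rightarrow> nat \<Rightarrow> nat" where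
  "jumps T k = card {i. i < k \<and> T i \<noteq> T (Suc i)}"

lemma jn_commute: "X \<in> F \<Longrightarrow> Y \<in> F \<Longrightarrow> jn X Y = jn Y X"
  by (meson jn_closed jn_least jn_upper1 jn_upper2 subset_antisym)

lemma jn_absorb: "X \<in> F \<Longrightarrow> Y \<in> F \<Longrightarrow> Y \<subseteq> X \<Longrightarrow> jn X Y = X"
  by (meson jn_least jn_upper1 order_refl subset_antisym)

lemma cover_chain_subset_Suc: "cover_chain T k \<Longrightarrow> i < k \<Longrightarrow> T i \<subseteq> T (Suc i)"
  unfolding cover_chain_def covers_def by auto

lemma cover_chain_mono:
  assumes "cover_chain T k" "i \<le> j" "j \<le> k"
  shows "T i \<subseteq> T j"
  using assms(2,3)
proof (induction rule: dec_induct)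
  case (step j)
  then show ?case using cover_chain_subset_Suc[OF assms(1), of j] by auto
qed simp

lemma cover_chain_SucD: "cover_chain T (Suc k) \<Longrightarrow> cover_chain T k"
  unfolding cover_chain_def by auto

lemma jumps_Suc: "jumps T (Suc k) = jumps T k + (if T k \<noteq> T (Suc k) then 1 else 0)"
proof -
  have "{i. i < Suc k \<and> T i \<noteq> T (Suc i)} =
      {i. i < k \<and> T i \<noteq> T (Suc i)} \<union> (if T k \<noteq> T (Suc k) then {k} else {})"
    by (auto simp: less_Suc_eq)
  then show ?thesis unfolding jumps_def by (simp add: card_insert_if)
qed

lemma eq_if_Int_eq:
  assumes "X \<in> F" "Y \<in> F" "V \<in> F" "X \<subseteq> Y" "Y \<subseteq> jn X V" "X \<inter> V = Y \<inter> V"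
  shows "X = Y"
proof -
  have "Y = jn X V \<inter> Y" using assms(5) by auto
  also have "\<dots> = jn X (V \<inter> Y)" using modular[OF assms(1,3,2,4)] .
  also have "\<dots> = X" using jn_absorb[OF assms(1) Int_closed[OF assms(3,2)]] assms(6) by auto
  finally show ?thesis by simp
qed

lemma covers_Int:
  assumes XF: "X \<in> F" and YF: "Y \<in> F" and VF: "V \<in> F"
    and cov: "covers X Y" and Y: "Y \<subseteq> jn X V"
  shows "covers (X \<inter> V) (Y \<inter> V)"
  unfolding covers_def
proof (intro conjI ballI impI)
  have XY: "X \<subset> Y" using cov unfolding covers_def by auto
  then show "X \<inter> V \<subset> Y \<inter> V" using eq_if_Int_eq[OF XF YF VF _ Y] by blast
  fix Z assume ZF: "Z \<in> F" and Z: "X \<inter> V \<subseteq> Z \<and> Z \<subseteq> Y \<inter> V"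
  have "X \<subseteq> jn X Z" "jn X Z \<subseteq> Y" "jn X Z \<in> F"
    using jn_upper1 jn_least jn_closed XF ZF YF XY Z by auto
  then have "jn X Z = X \<or> jn X Z = Y" using cov unfolding covers_def by blast
  then show "Z = X \<inter> V \<or> Z = Y \<inter> V"
  proof
    assume "jn X Z = X"
    then show ?thesis using jn_upper2[OF XF ZF] Z by auto
  next
    assume h: "jn X Z = Y"
    have "Y \<inter> V = jn Z X \<inter> V" using h jn_commute[OF XF ZF] by simp
    also have "\<dots> = jn Z (X \<inter> V)" using modular[OF ZF XF VF] Z by auto
    also have "\<dots> = Z" using jn_absorb[OF ZF Int_closed[OF XF VF]] Z by auto
    finally show ?thesis by simp
  qed
qed

lemma cover_chain_Int_step_above:
  assumes S: "cover_chain S l" and i: "i < l" and VF: "V \<in> F" and cov: "covers V (S l)"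
    and notV: "\<not> S i \<subseteq> V"
  shows "(S i \<inter> V = S (Suc i) \<inter> V \<longleftrightarrow> S i = S (Suc i))"
    and "S i \<inter> V = S (Suc i) \<inter> V \<or> covers (S i \<inter> V) (S (Suc i) \<inter> V)"
proof -
  have SF: "S i \<in> F" "S (Suc i) \<in> F" "S l \<in> F" using S i unfolding cover_chain_def by auto
  have sub: "S i \<subseteq> S (Suc i)" using cover_chain_subset_Suc[OF S i] .
  have Sl: "S (Suc i) \<subseteq> S l" using cover_chain_mono[OF S] i by simp
  have "V \<subseteq> jn (S i) V" "jn (S i) V \<subseteq> S l" "jn (S i) V \<in> F" "jn (S i) V \<noteq> V"
    using jn_upper1[OF SF(1) VF] jn_upper2[OF SF(1) VF] jn_least[OF SF(1) VF SF(3)]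
      jn_closed[OF SF(1) VF] cover_chain_mono[OF S, of i l] i cov notV
    unfolding covers_def by auto
  then have "jn (S i) V = S l" using cov unfolding covers_def by blast
  then have le: "S (Suc i) \<subseteq> jn (S i) V" using Sl by simp
  show eq: "S i \<inter> V = S (Suc i) \<inter> V \<longleftrightarrow> S i = S (Suc i)"
    using eq_if_Int_eq[OF SF(1,2) VF sub le] by auto
  show "S i \<inter> V = S (Suc i) \<inter> V \<or> covers (S i \<inter> V) (S (Suc i) \<inter> V)"
    using S i covers_Int[OF SF(1,2) VF _ le] unfolding cover_chain_def by auto
qed

lemma cover_chain_Int_step_entry:
  assumes S: "cover_chain S l" and i: "i < l" and VF: "V \<in> F"
    and inV: "S i \<subseteq> V" and notV: "\<not> S (Suc i) \<subseteq> V"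
  shows "S (Suc i) \<inter> V = S i" and "S i \<noteq> S (Suc i)"
proof -
  have SF: "S i \<in> F" "S (Suc i) \<in> F" using S i unfolding cover_chain_def by auto
  show ne: "S i \<noteq> S (Suc i)" using inV notV by auto
  then have "covers (S i) (S (Suc i))" using S i unfolding cover_chain_def by auto
  moreover have "S i \<subseteq> S (Suc i) \<inter> V" using inV cover_chain_subset_Suc[OF S i] by auto
  ultimately show "S (Suc i) \<inter> V = S i"
    using Int_closed[OF SF(2) VF] notV unfolding covers_def by blast
qed

text \<open>The jump lost is the one where the chain leaves \<open>V\<close>.\<close>
lemma cover_chain_Int_covered:
  assumes S: "cover_chain S l" and VF: "V \<in> F" and cov: "covers V (S l)" and S0: "S 0 \<subseteq> V"
  shows "cover_chain (\<lambda>j. S j \<inter> V) l" and "jumps S l = Suc (jumps (\<lambda>j. S j \<inter> V) l)"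
proof -
  define W where "W j = S j \<inter> V" for j
  have "\<not> S l \<subseteq> V" using cov unfolding covers_def by blast
  then obtain p where pl: "p < l" and below: "\<And>i. i \<le> p \<Longrightarrow> S i \<subseteq> V"
    and exit: "\<not> S (Suc p) \<subseteq> V"
    using ex_least_nat_less[of "\<lambda>j. \<not> S j \<subseteq> V" l] S0 by blast
  have above: "\<not> S i \<subseteq> V" if "p < i" "i \<le> l" for i
    using cover_chain_mono[OF S, of "Suc p" i] that exit by auto
  note entry = cover_chain_Int_step_entry[OF S pl VF below[OF order_refl] exit]
  have step: "(W i = W (Suc i) \<longleftrightarrow> S i = S (Suc i) \<or> i = p) \<and>
      (W i = W (Suc i) \<or> covers (W i) (W (Suc i)))" if i: "i < l" for i
  proof (cases i p rule: linorder_cases)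
    case less
    have "W i = S i" "W (Suc i) = S (Suc i)"
      using below[of i] below[of "Suc i"] less unfolding W_def by auto
    moreover have "S i = S (Suc i) \<or> covers (S i) (S (Suc i))"
      using S i unfolding cover_chain_def by blast
    ultimately show ?thesis using less by auto
  next
    case equal
    then show ?thesis using entry below[of p] unfolding W_def by auto
  next
    case greater
    then show ?thesis
      using cover_chain_Int_step_above[OF S i VF cov] above[of i] i unfolding W_def by auto
  qed
  have "\<forall>i\<le>l. W i \<in> F" using S Int_closed VF unfolding W_def cover_chain_def by blast
  then show "cover_chain (\<lambda>j. S j \<inter> V) l"
    using step unfolding cover_chain_def W_def by blast
  have "{i. i < l \<and> S i \<noteq> S (Suc i)} = insert p {i. i < l \<and> W i \<noteq> W (Suc i)}"
  proof (rule Set.set_eqI)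
    fix i
    show "i \<in> {i. i < l \<and> S i \<noteq> S (Suc i)} \<longleftrightarrow> i \<in> insert p {i. i < l \<and> W i \<noteq> W (Suc i)}"
      using step[of i] entry(2) pl by (cases "i = p") auto
  qed
  moreover have "p \<notin> {i. i < l \<and> W i \<noteq> W (Suc i)}" using step pl by auto
  ultimately show "jumps S l = Suc (jumps (\<lambda>j. S j \<inter> V) l)"
    unfolding jumps_def W_def by (simp add: card_insert_if)
qed

theorem jordan_hoelder_jumps:
  "cover_chain T k \<Longrightarrow> cover_chain Q l \<Longrightarrow> T 0 = Q 0 \<Longrightarrow> T k = Q l \<Longrightarrow> jumps T k = jumps Q l"
proof (induction k arbitrary: Q l)
  case 0
  have "Q i = Q (Suc i)" if "i < l" for i
    using cover_chain_mono[OF "0.prems"(2), of 0 i] cover_chain_mono[OF "0.prems"(2), of i "Suc i"]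
      cover_chain_mono[OF "0.prems"(2), of "Suc i" l] "0.prems"(3,4) that by auto
  then show ?case unfolding jumps_def by simp
next
  case (Suc k)
  have Tk: "cover_chain T k" using cover_chain_SucD[OF Suc.prems(1)] .
  show ?case
  proof (cases "T k = T (Suc k)")
    case True
    then show ?thesis using Suc.IH[OF Tk Suc.prems(2,3)] Suc.prems(4) by (simp add: jumps_Suc)
  next
    case False
    have cov: "covers (T k) (Q l)" using Suc.prems(1,4) False unfolding cover_chain_def by auto
    have TF: "T k \<in> F" using Suc.prems(1) unfolding cover_chain_def by auto
    have Q0: "Q 0 \<subseteq> T k" using cover_chain_mono[OF Tk, of 0 k] Suc.prems(3) by auto
    note cut = cover_chain_Int_covered[OF Suc.prems(2) TF cov Q0]
    have "T 0 = Q 0 \<inter> T k" "T k = Q l \<inter> T k" using Q0 Suc.prems(3) cov unfolding covers_def by auto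
    then have "jumps T k = jumps (\<lambda>j. Q j \<inter> T k) l" using Suc.IH[OF Tk cut(1)] by simp
    then show ?thesis using cut(2) False by (simp add: jumps_Suc)
  qed
qed

end

lemma (in cring) idealI_cring:
  assumes sub: "I \<subseteq> carrier R" and zero: "\<zero> \<in> I"
    and add: "\<And>x y. x \<in> I \<Longrightarrow> y \<in> I \<Longrightarrow> x \<oplus> y \<in> I"
    and mult: "\<And>r x. r \<in> carrier R \<Longrightarrow> x \<in> I \<Longrightarrow> r \<otimes> x \<in> I"
  shows "ideal I R"
proof (rule idealI)
  show "ring R" ..
  show "subgroup I (add_monoid R)"
  proof
    fix x assume x: "x \<in> I"
    then have "\<ominus> x = (\<ominus> \<one>) \<otimes> x" using sub by (simp add: l_minus subsetD)
    then show "inv\<^bsub>add_monoid R\<^esub> x \<in> I" using mult[OF _ x] by (simp add: a_inv_def)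
  qed (use sub zero add in auto)
  show "\<And>a x. a \<in> I \<Longrightarrow> x \<in> carrier R \<Longrightarrow> x \<otimes> a \<in> I" by (rule mult)
  show "\<And>a x. a \<in> I \<Longrightarrow> x \<in> carrier R \<Longrightarrow> a \<otimes> x \<in> I" using mult sub by (metis m_comm subsetD)
qed

definition colon_ideal :: "('r, 'm) ring_scheme \<Rightarrow> 'r set \<Rightarrow> 'r \<Rightarrow> 'r set" where
  "colon_ideal R A a = {r \<in> carrier R. r \<otimes>\<^bsub>R\<^esub> a \<in> A}"

context cring
begin

lemma colon_ideal_ideal:
  assumes A: "ideal A R" and a: "a \<in> carrier R"
  shows "ideal (colon_ideal R A a) R"
proof (rule idealI_cring)
  interpret A: ideal A R by fact
  show "colon_ideal R A a \<subseteq> carrier R" "\<zero> \<in> colon_ideal R A a"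
    unfolding colon_ideal_def using a by auto
  show "x \<oplus> y \<in> colon_ideal R A a" if "x \<in> colon_ideal R A a" "y \<in> colon_ideal R A a" for x y
    using that a unfolding colon_ideal_def by (simp add: l_distr)
  show "r \<otimes> x \<in> colon_ideal R A a" if "r \<in> carrier R" "x \<in> colon_ideal R A a" for r x
    using that a unfolding colon_ideal_def by (simp add: m_assoc A.I_l_closed)
qed

lemma ideal_Union_chain:
  assumes ch: "subset.chain {I. ideal I R} C" and ne: "C \<noteq> {}"
  shows "ideal (\<Union>C) R"
proof (rule idealI_cring)
  have CI: "\<And>I. I \<in> C \<Longrightarrow> ideal I R" using ch unfolding pred_on.chain_def by auto
  show "\<Union>C \<subseteq> carrier R" using ideal.Icarr[OF CI] by blast
  obtain I where "I \<in> C" using ne by blast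
  then show "\<zero> \<in> \<Union>C" using additive_subgroup.zero_closed[OF ideal.axioms(1)[OF CI]] by blast
  show "r \<otimes> x \<in> \<Union>C" if "r \<in> carrier R" "x \<in> \<Union>C" for r x
    using that ideal.I_l_closed[OF CI] by blast
  fix x y assume "x \<in> \<Union>C" "y \<in> \<Union>C"
  then obtain I J where I: "I \<in> C" "x \<in> I" and J: "J \<in> C" "y \<in> J" by blast
  have "I \<subseteq> J \<or> J \<subseteq> I" using ch I(1) J(1) unfolding pred_on.chain_def by auto
  then show "x \<oplus> y \<in> \<Union>C"
    using I J additive_subgroup.a_closed[OF ideal.axioms(1)[OF CI]] by blast
qed

lemma exists_maximalideal_superset:
  assumes B: "ideal B R" and one: "\<one> \<notin> B"
  obtains P where "maximalideal P R" and "B \<subseteq> P"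
proof -
  define A where "A = {I. ideal I R \<and> B \<subseteq> I \<and> \<one> \<notin> I}"
  have "\<exists>P\<in>A. \<forall>X\<in>A. P \<subseteq> X \<longrightarrow> X = P"
  proof (rule subset_Zorn_nonempty)
    show "A \<noteq> {}" using B one unfolding A_def by auto
  next
    fix C assume C: "C \<noteq> {}" "subset.chain A C"
    have "subset.chain {I. ideal I R} C" using C(2) unfolding A_def pred_on.chain_def by auto
    then have "ideal (\<Union>C) R" using C(1) by (rule ideal_Union_chain)
    moreover have "B \<subseteq> \<Union>C" using C unfolding A_def pred_on.chain_def by blast
    moreover have "\<one> \<notin> \<Union>C" using C unfolding A_def pred_on.chain_def by auto
    ultimately show "\<Union>C \<in> A" unfolding A_def by auto
  qed
  then obtain P where P: "P \<in> A" and Pmax: "\<And>X. X \<in> A \<Longrightarrow> P \<subseteq> X \<Longrightarrow> X = P" by auto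
  have "maximalideal P R"
  proof (rule maximalidealI)
    show "ideal P R" "carrier R \<noteq> P" using P unfolding A_def by auto
    fix J assume J: "ideal J R" "P \<subseteq> J" "J \<subseteq> carrier R"
    show "J = P \<or> J = carrier R"
      using ideal.one_imp_carrier[OF J(1)] Pmax[of J] J P unfolding A_def by blast
  qed
  then show thesis using that P unfolding A_def by auto
qed

lemma maximalideal_inverse_mod:
  assumes P: "maximalideal P R" and r: "r \<in> carrier R" "r \<notin> P"
  obtains s where "s \<in> carrier R" and "s \<otimes> r \<ominus> \<one> \<in> P"
proof -
  interpret maximalideal P R by fact
  define Q where "Q = P <+>\<^bsub>R\<^esub> PIdl r"
  have Qe: "Q = {p \<oplus> s \<otimes> r | p s. p \<in> P \<and> s \<in> carrier R}"
    unfolding Q_def set_add_def' cgenideal_def by blast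
  have Q: "ideal Q R" unfolding Q_def using add_ideals[OF is_ideal cgenideal_ideal[OF r(1)]] .
  have "P \<subseteq> Q"
  proof
    fix x assume x: "x \<in> P"
    have "x = x \<oplus> \<zero> \<otimes> r" using x a_subset r by auto
    then show "x \<in> Q" unfolding Qe using x by blast
  qed
  moreover have "r \<in> Q"
  proof -
    have "r = \<zero> \<oplus> \<one> \<otimes> r" using r by simp
    then show ?thesis
      unfolding Qe using additive_subgroup.zero_closed[OF ideal.axioms(1)[OF is_ideal]] by blast
  qed
  ultimately have "Q = carrier R"
    using I_maximal[OF Q] additive_subgroup.a_subset[OF ideal.axioms(1)[OF Q]] r(2) by blast
  then have "\<one> \<in> Q" by simp
  then obtain p s where ps: "p \<in> P" "s \<in> carrier R" "\<one> = p \<oplus> s \<otimes> r"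
    unfolding Qe by blast
  have "p \<in> carrier R" using ps(1) a_subset by blast
  then have "s \<otimes> r \<ominus> \<one> = \<ominus> p" unfolding ps(3) using ps(2) r(1) by algebra
  then show thesis using that ps a_inv_closed by auto
qed

end

context abelian_group
begin

lemma add_minus_cancel_left: "x \<in> carrier G \<Longrightarrow> y \<in> carrier G \<Longrightarrow> x \<oplus> y \<ominus> x = y"
  by (simp add: a_minus_def a_comm r_neg1)

lemma add_minus_cancel_right: "x \<in> carrier G \<Longrightarrow> y \<in> carrier G \<Longrightarrow> x \<oplus> y \<ominus> y = x"
  by (simp add: a_minus_def a_assoc r_neg)

lemma minus_add_cancel: "x \<in> carrier G \<Longrightarrow> y \<in> carrier G \<Longrightarrow> x \<ominus> y \<oplus> y = x"
  by (simp add: a_minus_def a_assoc l_neg)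

end

definition cyclic_submod :: "('r, 'm) ring_scheme \<Rightarrow> ('r, 'a, 'e) module_scheme \<Rightarrow> 'a \<Rightarrow> 'a set" where
  "cyclic_submod R M g = {r \<odot>\<^bsub>M\<^esub> g | r. r \<in> carrier R}"

definition smult_set :: "('r, 'a, 'e) module_scheme \<Rightarrow> 'r \<Rightarrow> 'a set \<Rightarrow> 'a set" where
  "smult_set M a X = {a \<odot>\<^bsub>M\<^esub> x | x. x \<in> X}"

inductive_set ideal_smult :: "('r, 'a, 'e) module_scheme \<Rightarrow> 'r set \<Rightarrow> 'a set \<Rightarrow> 'a set"
  for M :: "('r, 'a, 'e) module_scheme" and J :: "'r set" and X :: "'a set" where
  zero: "\<zero>\<^bsub>M\<^esub> \<in> ideal_smult M J X"
| add_smult: "x \<in> ideal_smult M J X \<Longrightarrow> j \<in> J \<Longrightarrow> y \<in> X \<Longrightarrow> x \<oplus>\<^bsub>M\<^esub> j \<odot>\<^bsub>M\<^esub> y \<in> ideal_smult M J X"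

lemma set_add_memI:
  shows "x \<in> X \<Longrightarrow> y \<in> Y \<Longrightarrow> x \<oplus>\<^bsub>M\<^esub> y \<in> X <+>\<^bsub>M\<^esub> Y"
  unfolding set_add_def' by blast

lemma set_add_memE:
  assumes "z \<in> X <+>\<^bsub>M\<^esub> Y"
  obtains x y where "z = x \<oplus>\<^bsub>M\<^esub> y" "x \<in> X" "y \<in> Y"
  using assms unfolding set_add_def' by blast

context module
begin

lemma submoduleD:
  assumes "submodule H R M"
  shows "H \<subseteq> carrier M" "\<zero>\<^bsub>M\<^esub> \<in> H" "\<And>a. a \<in> H \<Longrightarrow> \<ominus>\<^bsub>M\<^esub> a \<in> H"
    "\<And>a b. a \<in> carrier R \<Longrightarrow> b \<in> H \<Longrightarrow> a \<odot>\<^bsub>M\<^esub> b \<in> H"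
    "\<And>a b. a \<in> H \<Longrightarrow> b \<in> H \<Longrightarrow> a \<oplus>\<^bsub>M\<^esub> b \<in> H"
    "\<And>a b. a \<in> H \<Longrightarrow> b \<in> H \<Longrightarrow> a \<ominus>\<^bsub>M\<^esub> b \<in> H"
proof -
  interpret H: additive_subgroup H M by (rule additive_subgroup.intro, rule submodule.axioms(1)[OF assms])
  show "H \<subseteq> carrier M" "\<zero>\<^bsub>M\<^esub> \<in> H" "\<And>a. a \<in> H \<Longrightarrow> \<ominus>\<^bsub>M\<^esub> a \<in> H"
    "\<And>a b. a \<in> H \<Longrightarrow> b \<in> H \<Longrightarrow> a \<oplus>\<^bsub>M\<^esub> b \<in> H"
    by (auto intro: H.a_subset)
  then show "\<And>a b. a \<in> H \<Longrightarrow> b \<in> H \<Longrightarrow> a \<ominus>\<^bsub>M\<^esub> b \<in> H"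
    by (simp add: a_minus_def)
  show "\<And>a b. a \<in> carrier R \<Longrightarrow> b \<in> H \<Longrightarrow> a \<odot>\<^bsub>M\<^esub> b \<in> H"
    using submodule.smult_closed[OF assms] .
qed

lemma submoduleI_smult:
  assumes "H \<subseteq> carrier M" "\<zero>\<^bsub>M\<^esub> \<in> H" "\<And>a b. a \<in> H \<Longrightarrow> b \<in> H \<Longrightarrow> a \<oplus>\<^bsub>M\<^esub> b \<in> H"
    and smult: "\<And>r x. r \<in> carrier R \<Longrightarrow> x \<in> H \<Longrightarrow> r \<odot>\<^bsub>M\<^esub> x \<in> H"
  shows "submodule H R M"
proof (rule submoduleI)
  fix x assume x: "x \<in> H"
  then have "\<ominus>\<^bsub>M\<^esub> x = (\<ominus> \<one>) \<odot>\<^bsub>M\<^esub> x" using assms(1) by (simp add: smult_l_minus subsetD)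
  then show "\<ominus>\<^bsub>M\<^esub> x \<in> H" using smult[OF _ x] by simp
qed (use assms in auto)

lemma smult_l_diff:
  "a \<in> carrier R \<Longrightarrow> b \<in> carrier R \<Longrightarrow> x \<in> carrier M \<Longrightarrow> (a \<ominus> b) \<odot>\<^bsub>M\<^esub> x = a \<odot>\<^bsub>M\<^esub> x \<ominus>\<^bsub>M\<^esub> b \<odot>\<^bsub>M\<^esub> x"
  by (simp add: a_minus_def smult_l_distr smult_l_minus)

lemma submodule_abelian_subgroup: "submodule H R M \<Longrightarrow> abelian_subgroup H M"
  by (intro abelian_subgroupI3 additive_subgroup.intro submodule.axioms(1) abelian_group_axioms)

lemma submodule_mem_if_minus_mem:
  assumes N: "submodule N R M" and x: "x \<in> carrier M" and "x \<ominus>\<^bsub>M\<^esub> y \<in> N" "y \<in> N"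
  shows "x \<in> N"
proof -
  have "y \<in> carrier M" using assms(4) submoduleD(1)[OF N] by blast
  then have "x = (x \<ominus>\<^bsub>M\<^esub> y) \<oplus>\<^bsub>M\<^esub> y" using x by (simp add: M.minus_add_cancel)
  then show ?thesis using submoduleD(5)[OF N assms(3,4)] by simp
qed

lemma submodule_Int:
  assumes X: "submodule X R M" and Y: "submodule Y R M"
  shows "submodule (X \<inter> Y) R M"
  using submoduleD[OF X] submoduleD[OF Y] by (intro submoduleI_smult) auto

lemma set_add_submodule:
  assumes X: "submodule X R M" and Y: "submodule Y R M"
  shows "submodule (X <+>\<^bsub>M\<^esub> Y) R M"
proof (rule submoduleI_smult)
  note sx = submoduleD[OF X] and sy = submoduleD[OF Y]
  show "X <+>\<^bsub>M\<^esub> Y \<subseteq> carrier M" using sx(1) sy(1) by (rule set_add_closed)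
  have "\<zero>\<^bsub>M\<^esub> \<oplus>\<^bsub>M\<^esub> \<zero>\<^bsub>M\<^esub> \<in> X <+>\<^bsub>M\<^esub> Y" using sx(2) sy(2) by (rule set_add_memI)
  then show "\<zero>\<^bsub>M\<^esub> \<in> X <+>\<^bsub>M\<^esub> Y" by simp
  fix a b assume "a \<in> X <+>\<^bsub>M\<^esub> Y"
  then obtain x y where xy: "a = x \<oplus>\<^bsub>M\<^esub> y" "x \<in> X" "y \<in> Y" by (rule set_add_memE)
  have c: "x \<in> carrier M" "y \<in> carrier M" using xy sx(1) sy(1) by auto
  show "r \<odot>\<^bsub>M\<^esub> a \<in> X <+>\<^bsub>M\<^esub> Y" if r: "r \<in> carrier R" for r
  proof -
    have "r \<odot>\<^bsub>M\<^esub> x \<oplus>\<^bsub>M\<^esub> r \<odot>\<^bsub>M\<^esub> y \<in> X <+>\<^bsub>M\<^esub> Y"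
      using sx(4)[OF r xy(2)] sy(4)[OF r xy(3)] by (rule set_add_memI)
    then show ?thesis using xy c r by (simp add: smult_r_distr)
  qed
  assume "b \<in> X <+>\<^bsub>M\<^esub> Y"
  then obtain x' y' where xy': "b = x' \<oplus>\<^bsub>M\<^esub> y'" "x' \<in> X" "y' \<in> Y" by (rule set_add_memE)
  have "(x \<oplus>\<^bsub>M\<^esub> x') \<oplus>\<^bsub>M\<^esub> (y \<oplus>\<^bsub>M\<^esub> y') \<in> X <+>\<^bsub>M\<^esub> Y"
    using sx(5)[OF xy(2) xy'(2)] sy(5)[OF xy(3) xy'(3)] by (rule set_add_memI)
  moreover have "x' \<in> carrier M" "y' \<in> carrier M" using xy' sx(1) sy(1) by auto
  ultimately show "a \<oplus>\<^bsub>M\<^esub> b \<in> X <+>\<^bsub>M\<^esub> Y" using xy xy' c by (simp add: M.a_ac)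
qed

lemma set_add_upper1:
  assumes Y: "submodule Y R M" and X: "X \<subseteq> carrier M"
  shows "X \<subseteq> X <+>\<^bsub>M\<^esub> Y"
proof
  fix x assume x: "x \<in> X"
  then have "x = x \<oplus>\<^bsub>M\<^esub> \<zero>\<^bsub>M\<^esub>" using X by auto
  then show "x \<in> X <+>\<^bsub>M\<^esub> Y" unfolding set_add_def' using x submoduleD(2)[OF Y] by blast
qed

lemma set_add_upper2:
  assumes X: "submodule X R M" and Y: "Y \<subseteq> carrier M"
  shows "Y \<subseteq> X <+>\<^bsub>M\<^esub> Y"
proof
  fix y assume y: "y \<in> Y"
  then have "y = \<zero>\<^bsub>M\<^esub> \<oplus>\<^bsub>M\<^esub> y" using Y by auto
  then show "y \<in> X <+>\<^bsub>M\<^esub> Y" unfolding set_add_def' using y submoduleD(2)[OF X] by blast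
qed

lemma set_add_least:
  assumes Z: "submodule Z R M" and "X \<subseteq> Z" "Y \<subseteq> Z"
  shows "X <+>\<^bsub>M\<^esub> Y \<subseteq> Z"
  unfolding set_add_def' using submoduleD(5)[OF Z] assms(2,3) by blast

lemma set_add_modular:
  assumes X: "submodule X R M" and Y: "submodule Y R M" and Z: "submodule Z R M" and XZ: "X \<subseteq> Z"
  shows "(X <+>\<^bsub>M\<^esub> Y) \<inter> Z = X <+>\<^bsub>M\<^esub> (Y \<inter> Z)"
proof (rule Set.set_eqI, rule iffI)
  fix a assume "a \<in> (X <+>\<^bsub>M\<^esub> Y) \<inter> Z"
  then obtain x y where xy: "a = x \<oplus>\<^bsub>M\<^esub> y" "x \<in> X" "y \<in> Y" "a \<in> Z" unfolding set_add_def' by blast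
  have "x \<in> carrier M" "y \<in> carrier M" using xy submoduleD(1)[OF X] submoduleD(1)[OF Y] by auto
  then have "y = a \<ominus>\<^bsub>M\<^esub> x" using xy(1) by (simp add: M.add_minus_cancel_left)
  moreover have "a \<ominus>\<^bsub>M\<^esub> x \<in> Z" using submoduleD(6)[OF Z] xy(2,4) XZ by blast
  ultimately have "y \<in> Z" by simp
  then show "a \<in> X <+>\<^bsub>M\<^esub> (Y \<inter> Z)" unfolding set_add_def' using xy by blast
next
  fix a assume "a \<in> X <+>\<^bsub>M\<^esub> (Y \<inter> Z)"
  then obtain x y where xy: "a = x \<oplus>\<^bsub>M\<^esub> y" "x \<in> X" "y \<in> Y" "y \<in> Z" unfolding set_add_def' by blast
  then have "a \<in> Z" using submoduleD(5)[OF Z] XZ by auto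
  then show "a \<in> (X <+>\<^bsub>M\<^esub> Y) \<inter> Z" unfolding set_add_def' using xy by blast
qed

lemma modular_set_lattice_submodules: "modular_set_lattice {X. submodule X R M} (set_add M)"
proof
  fix X Y Z assume "X \<in> {X. submodule X R M}" "Y \<in> {X. submodule X R M}"
  then have X: "submodule X R M" and Y: "submodule Y R M" by auto
  show "X \<inter> Y \<in> {X. submodule X R M}" using submodule_Int[OF X Y] by simp
  show "X <+>\<^bsub>M\<^esub> Y \<in> {X. submodule X R M}" using set_add_submodule[OF X Y] by simp
  show "X \<subseteq> X <+>\<^bsub>M\<^esub> Y" using set_add_upper1[OF Y submoduleD(1)[OF X]] .
  show "Y \<subseteq> X <+>\<^bsub>M\<^esub> Y" using set_add_upper2[OF X submoduleD(1)[OF Y]] .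
  assume "Z \<in> {X. submodule X R M}"
  then have Z: "submodule Z R M" by simp
  show "X \<subseteq> Z \<Longrightarrow> Y \<subseteq> Z \<Longrightarrow> X <+>\<^bsub>M\<^esub> Y \<subseteq> Z" using set_add_least[OF Z] by auto
  show "X \<subseteq> Z \<Longrightarrow> (X <+>\<^bsub>M\<^esub> Y) \<inter> Z = X <+>\<^bsub>M\<^esub> (Y \<inter> Z)" using set_add_modular[OF X Y Z] by auto
qed

lemma cyclic_submod_submodule: "g \<in> carrier M \<Longrightarrow> submodule (cyclic_submod R M g) R M"
proof (rule submoduleI_smult)
  assume g: "g \<in> carrier M"
  show "cyclic_submod R M g \<subseteq> carrier M" unfolding cyclic_submod_def using g by auto
  have "\<zero>\<^bsub>M\<^esub> = \<zero> \<odot>\<^bsub>M\<^esub> g" using g by simp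
  then show "\<zero>\<^bsub>M\<^esub> \<in> cyclic_submod R M g" unfolding cyclic_submod_def by blast
  fix x y assume "x \<in> cyclic_submod R M g"
  then obtain r where r: "r \<in> carrier R" "x = r \<odot>\<^bsub>M\<^esub> g" unfolding cyclic_submod_def by auto
  show "s \<odot>\<^bsub>M\<^esub> x \<in> cyclic_submod R M g" if s: "s \<in> carrier R" for s
  proof -
    have "s \<odot>\<^bsub>M\<^esub> x = (s \<otimes> r) \<odot>\<^bsub>M\<^esub> g" using r g s by (simp add: smult_assoc1)
    then show ?thesis unfolding cyclic_submod_def using r s by blast
  qed
  assume "y \<in> cyclic_submod R M g"
  then obtain s where s: "s \<in> carrier R" "y = s \<odot>\<^bsub>M\<^esub> g" unfolding cyclic_submod_def by auto
  have "x \<oplus>\<^bsub>M\<^esub> y = (r \<oplus> s) \<odot>\<^bsub>M\<^esub> g" using r s g by (simp add: smult_l_distr)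
  then show "x \<oplus>\<^bsub>M\<^esub> y \<in> cyclic_submod R M g" unfolding cyclic_submod_def using r s by blast
qed

lemma cyclic_submod_self: "g \<in> carrier M \<Longrightarrow> g \<in> cyclic_submod R M g"
  unfolding cyclic_submod_def by (metis (mono_tags, lifting) R.one_closed mem_Collect_eq smult_one)

lemma cyclic_submod_subset: "submodule L R M \<Longrightarrow> y \<in> L \<Longrightarrow> cyclic_submod R M y \<subseteq> L"
  unfolding cyclic_submod_def using submoduleD(4) by blast

lemma set_add_cyclic_eq_iff:
  assumes L: "submodule L R M" and y: "y \<in> carrier M"
  shows "L <+>\<^bsub>M\<^esub> cyclic_submod R M y = L \<longleftrightarrow> y \<in> L"
proof
  have "y \<in> L <+>\<^bsub>M\<^esub> cyclic_submod R M y"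
    using set_add_upper2[OF L] cyclic_submod_submodule[OF y] submoduleD(1) cyclic_submod_self[OF y] by blast
  then show "L <+>\<^bsub>M\<^esub> cyclic_submod R M y = L \<Longrightarrow> y \<in> L" by simp
  show "y \<in> L \<Longrightarrow> L <+>\<^bsub>M\<^esub> cyclic_submod R M y = L"
    using set_add_least[OF L _ cyclic_submod_subset[OF L]] set_add_upper1[OF cyclic_submod_submodule[OF y] submoduleD(1)[OF L]]
    by blast
qed

lemma smult_set_submodule: "a \<in> carrier R \<Longrightarrow> submodule X R M \<Longrightarrow> submodule (smult_set M a X) R M"
proof (rule submoduleI_smult)
  assume a: "a \<in> carrier R" and X: "submodule X R M"
  note sx = submoduleD[OF X]
  show "smult_set M a X \<subseteq> carrier M" unfolding smult_set_def using a sx(1) by auto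
  have "\<zero>\<^bsub>M\<^esub> = a \<odot>\<^bsub>M\<^esub> \<zero>\<^bsub>M\<^esub>" using a by simp
  then show "\<zero>\<^bsub>M\<^esub> \<in> smult_set M a X" unfolding smult_set_def using sx(2) by blast
  fix x x' assume "x \<in> smult_set M a X"
  then obtain y where y: "y \<in> X" "x = a \<odot>\<^bsub>M\<^esub> y" unfolding smult_set_def by auto
  have yc: "y \<in> carrier M" using y sx(1) by auto
  show "s \<odot>\<^bsub>M\<^esub> x \<in> smult_set M a X" if s: "s \<in> carrier R" for s
  proof -
    have "s \<odot>\<^bsub>M\<^esub> x = a \<odot>\<^bsub>M\<^esub> (s \<odot>\<^bsub>M\<^esub> y)" using y yc a s by (simp add: smult_assoc1[symmetric] m_comm)
    then show ?thesis unfolding smult_set_def using sx(4) y s by blast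
  qed
  assume "x' \<in> smult_set M a X"
  then obtain y' where y': "y' \<in> X" "x' = a \<odot>\<^bsub>M\<^esub> y'" unfolding smult_set_def by auto
  have "x \<oplus>\<^bsub>M\<^esub> x' = a \<odot>\<^bsub>M\<^esub> (y \<oplus>\<^bsub>M\<^esub> y')" using y y' yc sx(1) a by (simp add: smult_r_distr subsetD)
  then show "x \<oplus>\<^bsub>M\<^esub> x' \<in> smult_set M a X" unfolding smult_set_def using sx(5) y y' by blast
qed

lemma ideal_smult_subset: "submodule X R M \<Longrightarrow> J \<subseteq> carrier R \<Longrightarrow> ideal_smult M J X \<subseteq> X"
proof
  fix x assume X: "submodule X R M" and J: "J \<subseteq> carrier R" and x: "x \<in> ideal_smult M J X"
  from x show "x \<in> X"
    by (induction rule: ideal_smult.induct) (use J in \<open>auto intro: submoduleD[OF X]\<close>)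
qed

lemma ideal_smult_mem:
  assumes X: "submodule X R M" and "j \<in> J" "y \<in> X" "J \<subseteq> carrier R"
  shows "j \<odot>\<^bsub>M\<^esub> y \<in> ideal_smult M J X"
proof -
  have "\<zero>\<^bsub>M\<^esub> \<oplus>\<^bsub>M\<^esub> j \<odot>\<^bsub>M\<^esub> y \<in> ideal_smult M J X" using assms by (intro ideal_smult.intros)
  moreover have "j \<odot>\<^bsub>M\<^esub> y \<in> carrier M" using submoduleD(1)[OF X] assms by auto
  ultimately show ?thesis by simp
qed

lemma ideal_smult_add:
  "b \<in> ideal_smult M J X \<Longrightarrow> a \<in> ideal_smult M J X \<Longrightarrow> submodule X R M \<Longrightarrow> J \<subseteq> carrier R \<Longrightarrow>
   a \<oplus>\<^bsub>M\<^esub> b \<in> ideal_smult M J X"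
proof (induction b rule: ideal_smult.induct)
  case zero
  then show ?case using ideal_smult_subset submoduleD(1) by (metis M.r_zero subsetD)
next
  case (add_smult x j y)
  have "a \<in> carrier M" "x \<in> carrier M" "j \<odot>\<^bsub>M\<^esub> y \<in> carrier M"
    using add_smult ideal_smult_subset submoduleD(1) submoduleD(4) by (auto, blast+)
  then have "a \<oplus>\<^bsub>M\<^esub> (x \<oplus>\<^bsub>M\<^esub> j \<odot>\<^bsub>M\<^esub> y) = (a \<oplus>\<^bsub>M\<^esub> x) \<oplus>\<^bsub>M\<^esub> j \<odot>\<^bsub>M\<^esub> y" by (simp add: M.a_ac)
  then show ?case using add_smult by (auto intro: ideal_smult.add_smult)
qed

lemma ideal_smult_smult:
  "a \<in> ideal_smult M J X \<Longrightarrow> ideal J R \<Longrightarrow> submodule X R M \<Longrightarrow> r \<in> carrier R \<Longrightarrow>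
   r \<odot>\<^bsub>M\<^esub> a \<in> ideal_smult M J X"
proof (induction a rule: ideal_smult.induct)
  case zero
  then show ?case by (simp add: ideal_smult.zero)
next
  case (add_smult x j y)
  have Jc: "J \<subseteq> carrier R" using add_smult(5) ideal.axioms(1) additive_subgroup.a_subset by blast
  have jc: "j \<in> carrier R" using Jc add_smult by auto
  have "x \<in> carrier M" "y \<in> carrier M"
    using add_smult ideal_smult_subset[OF add_smult(6) Jc] submoduleD(1)[OF add_smult(6)] by auto
  then have "r \<odot>\<^bsub>M\<^esub> (x \<oplus>\<^bsub>M\<^esub> j \<odot>\<^bsub>M\<^esub> y) = r \<odot>\<^bsub>M\<^esub> x \<oplus>\<^bsub>M\<^esub> (r \<otimes> j) \<odot>\<^bsub>M\<^esub> y"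
    using jc add_smult(7) by (simp add: smult_r_distr smult_assoc1)
  moreover have "r \<otimes> j \<in> J" using ideal.I_l_closed[OF add_smult(5)] add_smult jc by auto
  ultimately show ?case using add_smult by (auto intro: ideal_smult.add_smult)
qed

lemma ideal_smult_submodule: "ideal J R \<Longrightarrow> submodule X R M \<Longrightarrow> submodule (ideal_smult M J X) R M"
proof (rule submoduleI_smult)
  assume J: "ideal J R" and X: "submodule X R M"
  have Jc: "J \<subseteq> carrier R" using J ideal.axioms(1) additive_subgroup.a_subset by blast
  show "ideal_smult M J X \<subseteq> carrier M" using ideal_smult_subset[OF X Jc] submoduleD(1)[OF X] by auto
  show "\<zero>\<^bsub>M\<^esub> \<in> ideal_smult M J X" by (rule ideal_smult.zero)
  show "\<And>r a. r \<in> carrier R \<Longrightarrow> a \<in> ideal_smult M J X \<Longrightarrow> r \<odot>\<^bsub>M\<^esub> a \<in> ideal_smult M J X"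
    using ideal_smult_smult J X by blast
  show "\<And>a b. a \<in> ideal_smult M J X \<Longrightarrow> b \<in> ideal_smult M J X \<Longrightarrow> a \<oplus>\<^bsub>M\<^esub> b \<in> ideal_smult M J X"
    using ideal_smult_add X Jc by blast
qed

end

section \<open>Purity gives \<open>J M \<inter> N = J N\<close>\<close>

text \<open>The test module \<open>R/J\<close>: the coset \<open>J + c\<close> is transported along \<open>c \<mapsto> \<lambda>_. c\<close>,
  because purity only quantifies over modules with carrier type \<open>(nat \<Rightarrow> 'r) set\<close>.\<close>

definition residue_embed :: "('r, 'm) ring_scheme \<Rightarrow> 'r set \<Rightarrow> 'r \<Rightarrow> (nat \<Rightarrow> 'r) set" where
  "residue_embed R J r = (\<lambda>c _. c) ` (J +>\<^bsub>R\<^esub> r)"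

definition class_rep :: "(nat \<Rightarrow> 'r) set \<Rightarrow> 'r" where
  "class_rep X = rep X 0"

definition residue_module :: "('r, 'm) ring_scheme \<Rightarrow> 'r set \<Rightarrow> ('r, (nat \<Rightarrow> 'r) set) module" where
  "residue_module R J =
    \<lparr> carrier = residue_embed R J ` carrier R, mult = (\<lambda>_ _. {}), one = {},
      zero = residue_embed R J \<zero>\<^bsub>R\<^esub>,
      add = (\<lambda>X Y. residue_embed R J (class_rep X \<oplus>\<^bsub>R\<^esub> class_rep Y)),
      smult = (\<lambda>r X. residue_embed R J (r \<otimes>\<^bsub>R\<^esub> class_rep X)) \<rparr>"

lemma rep_mem: "x \<in> X \<Longrightarrow> rep X \<in> X"
  unfolding rep_def by (rule someI)

context cring
begin

lemma residue_embed_eq_iff: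
  assumes J: "ideal J R" and "r \<in> carrier R" "s \<in> carrier R"
  shows "residue_embed R J r = residue_embed R J s \<longleftrightarrow> r \<ominus> s \<in> J"
proof -
  have "inj (\<lambda>c (_::nat). c)" by (auto simp: inj_def fun_eq_iff)
  then show ?thesis
    unfolding residue_embed_def using quotient_eq_iff_same_a_r_cos[OF assms] inj_image_eq_iff by metis
qed

lemma class_rep_residue_embed:
  assumes J: "ideal J R" and r: "r \<in> carrier R"
  shows "class_rep (residue_embed R J r) \<in> carrier R" and "class_rep (residue_embed R J r) \<ominus> r \<in> J"
proof -
  interpret J: ideal J R by fact
  have "r \<in> J +> r" using r additive_subgroup.zero_closed[OF J.is_additive_subgroup]
    unfolding a_r_coset_def' by (auto intro!: bexI[of _ \<zero>])
  then have "(\<lambda>_. r) \<in> residue_embed R J r" unfolding residue_embed_def by (rule imageI)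
  then have "rep (residue_embed R J r) \<in> residue_embed R J r" by (rule rep_mem)
  then obtain c where c: "c \<in> J +> r" "rep (residue_embed R J r) = (\<lambda>_. c)"
    unfolding residue_embed_def by blast
  then obtain j where j: "j \<in> J" "c = j \<oplus> r" unfolding a_r_coset_def' by blast
  have "class_rep (residue_embed R J r) = j \<oplus> r" unfolding class_rep_def c(2) j(2) ..
  moreover have "j \<in> carrier R" using j(1) J.Icarr by blast
  ultimately show "class_rep (residue_embed R J r) \<in> carrier R" "class_rep (residue_embed R J r) \<ominus> r \<in> J"
    using j(1) r by (simp_all add: minus_eq a_assoc r_neg)
qed

lemma residue_module_carrier: "carrier (residue_module R J) = residue_embed R J ` carrier R"
  unfolding residue_module_def by simp

lemma residue_module_zero: "\<zero>\<^bsub>residue_module R J\<^esub> = residue_embed R J \<zero>"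
  unfolding residue_module_def by simp

lemma residue_module_add:
  assumes J: "ideal J R" and r: "r \<in> carrier R" and s: "s \<in> carrier R"
  shows "residue_embed R J r \<oplus>\<^bsub>residue_module R J\<^esub> residue_embed R J s = residue_embed R J (r \<oplus> s)"
proof -
  interpret ideal J R by fact
  note a = class_rep_residue_embed[OF J r] and b = class_rep_residue_embed[OF J s]
  have "class_rep (residue_embed R J r) \<oplus> class_rep (residue_embed R J s) \<ominus> (r \<oplus> s)
     = (class_rep (residue_embed R J r) \<ominus> r) \<oplus> (class_rep (residue_embed R J s) \<ominus> s)"
    using a b r s by algebra
  also have "\<dots> \<in> J" using a b by (simp add: a_closed)
  finally show ?thesis unfolding residue_module_def using residue_embed_eq_iff[OF J] a b r s by simp
qed

lemma residue_module_smult: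
  assumes J: "ideal J R" and r: "r \<in> carrier R" and t: "t \<in> carrier R"
  shows "t \<odot>\<^bsub>residue_module R J\<^esub> residue_embed R J r = residue_embed R J (t \<otimes> r)"
proof -
  interpret ideal J R by fact
  note a = class_rep_residue_embed[OF J r]
  have "t \<otimes> class_rep (residue_embed R J r) \<ominus> t \<otimes> r = t \<otimes> (class_rep (residue_embed R J r) \<ominus> r)"
    using a r t by algebra
  also have "\<dots> \<in> J" using a t by (simp add: I_l_closed)
  finally show ?thesis unfolding residue_module_def using residue_embed_eq_iff[OF J] a r t by simp
qed

lemma residue_module_abelian_group:
  assumes J: "ideal J R"
  shows "abelian_group (residue_module R J)"
proof (rule abelian_groupI)
  note simps = residue_module_carrier residue_module_zero residue_module_add[OF J]
  fix x y z assume "x \<in> carrier (residue_module R J)" "y \<in> carrier (residue_module R J)"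
    "z \<in> carrier (residue_module R J)"
  then obtain a b c where abc: "a \<in> carrier R" "b \<in> carrier R" "c \<in> carrier R"
    "x = residue_embed R J a" "y = residue_embed R J b" "z = residue_embed R J c"
    unfolding residue_module_carrier by auto
  show "x \<oplus>\<^bsub>residue_module R J\<^esub> y \<in> carrier (residue_module R J)" using abc by (simp add: simps)
  show "x \<oplus>\<^bsub>residue_module R J\<^esub> y \<oplus>\<^bsub>residue_module R J\<^esub> z =
      x \<oplus>\<^bsub>residue_module R J\<^esub> (y \<oplus>\<^bsub>residue_module R J\<^esub> z)"
    using abc by (simp add: simps a_assoc)
  show "x \<oplus>\<^bsub>residue_module R J\<^esub> y = y \<oplus>\<^bsub>residue_module R J\<^esub> x"
    using abc by (simp add: simps a_comm)
next
  note simps = residue_module_carrier residue_module_zero residue_module_add[OF J]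
  show "\<zero>\<^bsub>residue_module R J\<^esub> \<in> carrier (residue_module R J)" by (simp add: simps)
  fix x assume "x \<in> carrier (residue_module R J)"
  then obtain a where a: "a \<in> carrier R" "x = residue_embed R J a" unfolding residue_module_carrier by auto
  show "\<zero>\<^bsub>residue_module R J\<^esub> \<oplus>\<^bsub>residue_module R J\<^esub> x = x" using a by (simp add: simps)
  have "residue_embed R J (\<ominus> a) \<oplus>\<^bsub>residue_module R J\<^esub> x = \<zero>\<^bsub>residue_module R J\<^esub>"
    using a by (simp add: simps l_neg)
  then show "\<exists>y\<in>carrier (residue_module R J). y \<oplus>\<^bsub>residue_module R J\<^esub> x = \<zero>\<^bsub>residue_module R J\<^esub>"
    using a unfolding residue_module_carrier by blast
qed

lemma residue_module_module:
  assumes J: "ideal J R"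
  shows "module R (residue_module R J)"
proof (rule moduleI)
  note simps = residue_module_carrier residue_module_add[OF J] residue_module_smult[OF J]
  show "cring R" ..
  show "abelian_group (residue_module R J)" by (rule residue_module_abelian_group[OF J])
  fix a b x y assume a: "a \<in> carrier R" and b: "b \<in> carrier R"
    and "x \<in> carrier (residue_module R J)" "y \<in> carrier (residue_module R J)"
  then obtain c d where cd: "c \<in> carrier R" "d \<in> carrier R" "x = residue_embed R J c" "y = residue_embed R J d"
    unfolding residue_module_carrier by auto
  show "a \<odot>\<^bsub>residue_module R J\<^esub> x \<in> carrier (residue_module R J)" using a cd by (simp add: simps)
  show "(a \<oplus> b) \<odot>\<^bsub>residue_module R J\<^esub> x =
      a \<odot>\<^bsub>residue_module R J\<^esub> x \<oplus>\<^bsub>residue_module R J\<^esub> b \<odot>\<^bsub>residue_module R J\<^esub> x"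
    using a b cd by (simp add: simps l_distr)
  show "a \<odot>\<^bsub>residue_module R J\<^esub> (x \<oplus>\<^bsub>residue_module R J\<^esub> y) =
      a \<odot>\<^bsub>residue_module R J\<^esub> x \<oplus>\<^bsub>residue_module R J\<^esub> a \<odot>\<^bsub>residue_module R J\<^esub> y"
    using a cd by (simp add: simps r_distr)
  show "(a \<otimes> b) \<odot>\<^bsub>residue_module R J\<^esub> x = a \<odot>\<^bsub>residue_module R J\<^esub> (b \<odot>\<^bsub>residue_module R J\<^esub> x)"
    using a b cd by (simp add: simps m_assoc)
next
  fix x assume "x \<in> carrier (residue_module R J)"
  then obtain c where "c \<in> carrier R" "x = residue_embed R J c" unfolding residue_module_carrier by auto
  then show "\<one> \<odot>\<^bsub>residue_module R J\<^esub> x = x" by (simp add: residue_module_smult[OF J])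
qed

end

context
  fixes R :: "'r ring" (structure)
  assumes ring_R: "ring R"
begin

interpretation ring R by (rule ring_R)

lemma fun_span_closed:
  assumes G: "\<forall>g\<in>G. \<forall>p. g p \<in> carrier R" and f: "f \<in> fun_span R G"
  shows "f p \<in> carrier R"
  using f by induction (use G in auto)

lemma fun_span_eq: "f \<in> fun_span R G \<Longrightarrow> (\<And>p. f p = h p) \<Longrightarrow> h \<in> fun_span R G"
  by (metis ext)

lemma fun_span_add:
  assumes G: "\<forall>g\<in>G. \<forall>p. g p \<in> carrier R" and f: "f \<in> fun_span R G" and h: "h \<in> fun_span R G"
  shows "(\<lambda>p. f p \<oplus> h p) \<in> fun_span R G"
  using h
proof induction
  case zero
  show ?case using f by (rule fun_span_eq) (simp add: fun_span_closed[OF G f])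
next
  case (step h c g)
  have "(\<lambda>p. (f p \<oplus> h p) \<oplus> c \<otimes> g p) \<in> fun_span R G"
    using step.IH step.hyps(2,3) by (rule fun_span.step)
  then show ?case
  proof (rule fun_span_eq)
    fix p
    have "f p \<in> carrier R" "h p \<in> carrier R" "g p \<in> carrier R"
      using fun_span_closed[OF G f] fun_span_closed[OF G step.hyps(1)] G step.hyps(3) by auto
    then show "(f p \<oplus> h p) \<oplus> c \<otimes> g p = f p \<oplus> (h p \<oplus> c \<otimes> g p)"
      using step.hyps(2) by algebra
  qed
qed

lemma fun_span_smult:
  assumes G: "\<forall>g\<in>G. \<forall>p. g p \<in> carrier R" and f: "f \<in> fun_span R G" and c: "c \<in> carrier R"
  shows "(\<lambda>p. c \<otimes> f p) \<in> fun_span R G"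
  using f
proof induction
  case zero
  show ?case using fun_span.zero by (rule fun_span_eq) (simp add: c)
next
  case (step f d g)
  have "(\<lambda>p. c \<otimes> f p \<oplus> (c \<otimes> d) \<otimes> g p) \<in> fun_span R G"
    using step c by (intro fun_span.step) auto
  then show ?case
  proof (rule fun_span_eq)
    fix p
    have "f p \<in> carrier R" "g p \<in> carrier R"
      using fun_span_closed[OF G step.hyps(1)] G step.hyps(3) by auto
    then show "c \<otimes> f p \<oplus> (c \<otimes> d) \<otimes> g p = c \<otimes> (f p \<oplus> d \<otimes> g p)"
      using step.hyps(2) c by algebra
  qed
qed

lemma fun_span_gen:
  assumes G: "\<forall>g\<in>G. \<forall>p. g p \<in> carrier R" and g: "g \<in> G"
  shows "g \<in> fun_span R G"
proof -
  have "(\<lambda>p. \<zero> \<oplus> \<one> \<otimes> g p) \<in> fun_span R G" using g by (intro fun_span.step fun_span.zero) auto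
  then show ?thesis by (rule fun_span_eq) (use G g in auto)
qed

lemma delta_closed: "delta R q p \<in> carrier R"
  unfolding delta_def by simp

lemma tensor_gens_closed: "\<forall>g\<in>tensor_gens R A U. \<forall>p. g p \<in> carrier R"
  unfolding tensor_gens_def by (auto intro!: minus_closed m_closed delta_closed)

lemma tensor_zero_degenerate_gen:
  assumes "(\<lambda>p. d p \<ominus> d p \<ominus> d p) \<in> tensor_gens R A U" and d: "\<And>p. d p \<in> carrier R"
  shows "tensor_zero R A U d"
proof -
  have "(\<lambda>p. (\<ominus> \<one>) \<otimes> (d p \<ominus> d p \<ominus> d p)) \<in> fun_span R (tensor_gens R A U)"
    using tensor_gens_closed fun_span_gen[OF tensor_gens_closed assms(1)] by (rule fun_span_smult) simp
  then show ?thesis unfolding tensor_zero_def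
    by (rule fun_span_eq) (use d in algebra)
qed

end

text \<open>Modules whose record is not extended: the setting of \<open>pure_sub\<close> and \<open>quot_mod\<close>.\<close>
locale plain_module = module R M for R :: "'r ring" (structure) and M :: "('r, 'a) module" (structure)

sublocale plain_module \<subseteq> L: modular_set_lattice "{X. submodule X R M}" "set_add M"
  by (rule modular_set_lattice_submodules)

context plain_module
begin

lemma tensor_zero_delta_zero_left:
  assumes U: "module R U" and u: "u \<in> carrier U"
  shows "tensor_zero R M U (delta R (\<zero>\<^bsub>M\<^esub>, u))"
proof (rule tensor_zero_degenerate_gen[OF R.ring_axioms])
  have "(\<lambda>p. delta R (\<zero>\<^bsub>M\<^esub> \<oplus>\<^bsub>M\<^esub> \<zero>\<^bsub>M\<^esub>, u) p \<ominus> delta R (\<zero>\<^bsub>M\<^esub>, u) p \<ominus> delta R (\<zero>\<^bsub>M\<^esub>, u) p)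
      \<in> tensor_gens R M U"
    unfolding tensor_gens_def using u by blast
  then show "(\<lambda>p. delta R (\<zero>\<^bsub>M\<^esub>, u) p \<ominus> delta R (\<zero>\<^bsub>M\<^esub>, u) p \<ominus> delta R (\<zero>\<^bsub>M\<^esub>, u) p)
      \<in> tensor_gens R M U" by simp
qed (rule delta_closed[OF R.ring_axioms])

lemma tensor_zero_delta_zero_right:
  assumes U: "module R U" and y: "y \<in> carrier M"
  shows "tensor_zero R M U (delta R (y, \<zero>\<^bsub>U\<^esub>))"
proof (rule tensor_zero_degenerate_gen[OF R.ring_axioms])
  interpret U: module R U by fact
  have "(\<lambda>p. delta R (y, \<zero>\<^bsub>U\<^esub> \<oplus>\<^bsub>U\<^esub> \<zero>\<^bsub>U\<^esub>) p \<ominus> delta R (y, \<zero>\<^bsub>U\<^esub>) p \<ominus> delta R (y, \<zero>\<^bsub>U\<^esub>) p)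
      \<in> tensor_gens R M U"
    unfolding tensor_gens_def using y by blast
  then show "(\<lambda>p. delta R (y, \<zero>\<^bsub>U\<^esub>) p \<ominus> delta R (y, \<zero>\<^bsub>U\<^esub>) p \<ominus> delta R (y, \<zero>\<^bsub>U\<^esub>) p)
      \<in> tensor_gens R M U" by simp
qed (rule delta_closed[OF R.ring_axioms])

text \<open>\<open>(x + j y) \<otimes> u = x \<otimes> u + j y \<otimes> u = x \<otimes> u + y \<otimes> j u = x \<otimes> u + y \<otimes> 0\<close>\<close>
lemma tensor_zero_delta_add_smult:
  assumes U: "module R U" and x: "tensor_zero R M U (delta R (x, u))"
    and xc: "x \<in> carrier M" and y: "y \<in> carrier M" and j: "j \<in> carrier R" and u: "u \<in> carrier U"
    and ju: "j \<odot>\<^bsub>U\<^esub> u = \<zero>\<^bsub>U\<^esub>"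
  shows "tensor_zero R M U (delta R (x \<oplus>\<^bsub>M\<^esub> j \<odot>\<^bsub>M\<^esub> y, u))"
proof -
  let ?G = "tensor_gens R M U"
  note G = tensor_gens_closed[OF R.ring_axioms, of M U]
  note delta_closed = delta_closed[OF R.ring_axioms]
  note add = fun_span_add[OF R.ring_axioms G] and smult = fun_span_smult[OF R.ring_axioms G]
    and gen = fun_span_gen[OF R.ring_axioms G]
  have minus_one: "\<ominus> \<one> \<in> carrier R" by simp
  have jy: "j \<odot>\<^bsub>M\<^esub> y \<in> carrier M" using j y by simp
  define a where "a = x \<oplus>\<^bsub>M\<^esub> j \<odot>\<^bsub>M\<^esub> y"
  have g1: "(\<lambda>p. delta R (a, u) p \<ominus> delta R (x, u) p \<ominus> delta R (j \<odot>\<^bsub>M\<^esub> y, u) p) \<in> ?G"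
    unfolding tensor_gens_def a_def using xc jy u by blast
  have g3: "(\<lambda>p. delta R (j \<odot>\<^bsub>M\<^esub> y, u) p \<ominus> j \<otimes> delta R (y, u) p) \<in> ?G"
    unfolding tensor_gens_def using j y u by blast
  have "(\<lambda>p. delta R (y, j \<odot>\<^bsub>U\<^esub> u) p \<ominus> j \<otimes> delta R (y, u) p) \<in> ?G"
    unfolding tensor_gens_def using j y u by blast
  then have g4: "(\<lambda>p. delta R (y, \<zero>\<^bsub>U\<^esub>) p \<ominus> j \<otimes> delta R (y, u) p) \<in> ?G" by (simp only: ju)
  have "(\<lambda>p. ((delta R (a, u) p \<ominus> delta R (x, u) p \<ominus> delta R (j \<odot>\<^bsub>M\<^esub> y, u) p) \<oplus> delta R (x, u) p) \<oplus>
      ((delta R (j \<odot>\<^bsub>M\<^esub> y, u) p \<ominus> j \<otimes> delta R (y, u) p) \<oplus>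
      ((\<ominus> \<one>) \<otimes> (delta R (y, \<zero>\<^bsub>U\<^esub>) p \<ominus> j \<otimes> delta R (y, u) p) \<oplus> delta R (y, \<zero>\<^bsub>U\<^esub>) p)))
      \<in> fun_span R ?G"
    using add[OF add[OF gen[OF g1] x[unfolded tensor_zero_def]]
        add[OF gen[OF g3] add[OF smult[OF gen[OF g4] minus_one]
          tensor_zero_delta_zero_right[OF U y, unfolded tensor_zero_def]]]] .
  then show ?thesis unfolding tensor_zero_def a_def[symmetric]
  proof (rule fun_span_eq[OF R.ring_axioms])
    fix p
    have "delta R (a, u) p \<in> carrier R" "delta R (x, u) p \<in> carrier R"
      "delta R (j \<odot>\<^bsub>M\<^esub> y, u) p \<in> carrier R" "delta R (y, u) p \<in> carrier R"
      "delta R (y, \<zero>\<^bsub>U\<^esub>) p \<in> carrier R" by (rule delta_closed)+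
    then show "((delta R (a, u) p \<ominus> delta R (x, u) p \<ominus> delta R (j \<odot>\<^bsub>M\<^esub> y, u) p) \<oplus> delta R (x, u) p) \<oplus>
      ((delta R (j \<odot>\<^bsub>M\<^esub> y, u) p \<ominus> j \<otimes> delta R (y, u) p) \<oplus>
      ((\<ominus> \<one>) \<otimes> (delta R (y, \<zero>\<^bsub>U\<^esub>) p \<ominus> j \<otimes> delta R (y, u) p) \<oplus> delta R (y, \<zero>\<^bsub>U\<^esub>) p))
      = delta R (a, u) p"
      using j by algebra
  qed
qed

lemma tensor_zero_ideal_smult:
  assumes J: "ideal J R" and x: "x \<in> ideal_smult M J (carrier M)"
  shows "tensor_zero R M (residue_module R J) (delta R (x, residue_embed R J \<one>))"
proof -
  interpret J: ideal J R by fact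
  let ?U = "residue_module R J" and ?u = "residue_embed R J \<one>"
  have U: "module R ?U" by (rule residue_module_module[OF J])
  have u: "?u \<in> carrier ?U" unfolding residue_module_carrier by simp
  from x show ?thesis
  proof induction
    case zero
    show ?case by (rule tensor_zero_delta_zero_left[OF U u])
  next
    case (add_smult x j y)
    have j: "j \<in> carrier R" using add_smult J.Icarr by blast
    have x: "x \<in> carrier M"
      using add_smult.hyps(1) ideal_smult_subset[OF carrier_is_submodule J.a_subset] by auto
    have "j \<odot>\<^bsub>?U\<^esub> ?u = residue_embed R J (j \<otimes> \<one>)" using residue_module_smult[OF J] j by simp
    also have "\<dots> = \<zero>\<^bsub>?U\<^esub>"
      unfolding residue_module_zero using residue_embed_eq_iff[OF J] j add_smult(2) by (simp add: a_minus_def)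
    finally show ?case
      using tensor_zero_delta_add_smult[OF U add_smult.IH x _ j u] add_smult(3) by blast
  qed
qed

end

text \<open>On the free module over \<open>M \<times> R/J\<close> this is \<open>m \<otimes> (c + J) \<mapsto> c m\<close>; restricted to
  \<open>N \<times> R/J\<close> it respects the tensor relations modulo \<open>J N\<close>.\<close>
definition tensor_eval ::
    "'r ring \<Rightarrow> ('r, 'a) module \<Rightarrow> ('a \<times> (nat \<Rightarrow> 'r) set) set \<Rightarrow> ('a \<times> (nat \<Rightarrow> 'r) set \<Rightarrow> 'r) \<Rightarrow> 'a" where
  "tensor_eval R M S f = (\<Oplus>\<^bsub>M\<^esub>p\<in>S. (f p \<otimes>\<^bsub>R\<^esub> class_rep (snd p)) \<odot>\<^bsub>M\<^esub> fst p)"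

context plain_module
begin

lemma class_rep_closed: "ideal J R \<Longrightarrow> u \<in> carrier (residue_module R J) \<Longrightarrow> class_rep u \<in> carrier R"
  unfolding residue_module_carrier using class_rep_residue_embed by auto

context
  fixes J and S
  assumes J: "ideal J R" and S: "S \<subseteq> carrier M \<times> carrier (residue_module R J)" and fin: "finite S"
begin

lemma tensor_eval_term_closed:
  "\<forall>p. f p \<in> carrier R \<Longrightarrow> (\<lambda>p. (f p \<otimes> class_rep (snd p)) \<odot>\<^bsub>M\<^esub> fst p) \<in> S \<rightarrow> carrier M"
  using S class_rep_closed[OF J] by auto

lemma tensor_eval_closed: "\<forall>p. f p \<in> carrier R \<Longrightarrow> tensor_eval R M S f \<in> carrier M"
  unfolding tensor_eval_def by (rule M.finsum_closed[OF tensor_eval_term_closed])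

lemma tensor_eval_add:
  assumes f: "\<forall>p. f p \<in> carrier R" and g: "\<forall>p. g p \<in> carrier R"
  shows "tensor_eval R M S (\<lambda>p. f p \<oplus> g p) = tensor_eval R M S f \<oplus>\<^bsub>M\<^esub> tensor_eval R M S g"
  unfolding tensor_eval_def
  using S class_rep_closed[OF J] f g
  by (subst M.finsum_addf[symmetric]) (auto intro!: M.finsum_cong' simp: l_distr smult_l_distr)

lemma tensor_eval_smult:
  assumes f: "\<forall>p. f p \<in> carrier R" and c: "c \<in> carrier R"
  shows "tensor_eval R M S (\<lambda>p. c \<otimes> f p) = c \<odot>\<^bsub>M\<^esub> tensor_eval R M S f"
  unfolding tensor_eval_def
  using finsum_smult_ldistr[OF fin c tensor_eval_term_closed[OF f]] S class_rep_closed[OF J] f c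
  by (auto intro!: M.finsum_cong' simp: m_assoc smult_assoc1)

lemma tensor_eval_minus:
  assumes f: "\<forall>p. f p \<in> carrier R" and g: "\<forall>p. g p \<in> carrier R"
  shows "tensor_eval R M S (\<lambda>p. f p \<ominus> g p) = tensor_eval R M S f \<ominus>\<^bsub>M\<^esub> tensor_eval R M S g"
proof -
  have g': "\<forall>p. \<ominus> \<one> \<otimes> g p \<in> carrier R" using g by simp
  have "(\<lambda>p. f p \<ominus> g p) = (\<lambda>p. f p \<oplus> (\<ominus> \<one> \<otimes> g p))"
    using g by (auto simp: a_minus_def l_minus)
  then have "tensor_eval R M S (\<lambda>p. f p \<ominus> g p) = tensor_eval R M S f \<oplus>\<^bsub>M\<^esub> (\<ominus> \<one>) \<odot>\<^bsub>M\<^esub> tensor_eval R M S g"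
    using tensor_eval_add[OF f g'] tensor_eval_smult[OF g] by simp
  then show ?thesis using tensor_eval_closed[OF g] by (simp add: smult_l_minus a_minus_def)
qed

lemma tensor_eval_delta:
  assumes q: "q \<in> S"
  shows "tensor_eval R M S (delta R q) = class_rep (snd q) \<odot>\<^bsub>M\<^esub> fst q"
proof -
  have "tensor_eval R M S (delta R q) = (\<Oplus>\<^bsub>M\<^esub>p\<in>S. if q = p then class_rep (snd p) \<odot>\<^bsub>M\<^esub> fst p else \<zero>\<^bsub>M\<^esub>)"
    unfolding tensor_eval_def using S class_rep_closed[OF J]
    by (intro M.finsum_cong') (auto simp: delta_def)
  also have "\<dots> = class_rep (snd q) \<odot>\<^bsub>M\<^esub> fst q"
  proof -
    have "(\<lambda>p. class_rep (snd p) \<odot>\<^bsub>M\<^esub> fst p) \<in> S \<rightarrow> carrier M" using S class_rep_closed[OF J] by auto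
    from M.finsum_singleton[OF q fin this] show ?thesis .
  qed
  finally show ?thesis .
qed

lemma tensor_eval_delta3:
  assumes "q1 \<in> S" "q2 \<in> S" "q3 \<in> S"
  shows "tensor_eval R M S (\<lambda>p. delta R q1 p \<ominus> delta R q2 p \<ominus> delta R q3 p) =
    class_rep (snd q1) \<odot>\<^bsub>M\<^esub> fst q1 \<ominus>\<^bsub>M\<^esub> class_rep (snd q2) \<odot>\<^bsub>M\<^esub> fst q2 \<ominus>\<^bsub>M\<^esub> class_rep (snd q3) \<odot>\<^bsub>M\<^esub> fst q3"
proof -
  have d: "\<forall>p. delta R q p \<in> carrier R" for q by (simp add: delta_closed[OF R.ring_axioms])
  have "\<forall>p. delta R q1 p \<ominus> delta R q2 p \<in> carrier R" by (simp add: delta_closed[OF R.ring_axioms])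
  then show ?thesis
    using tensor_eval_minus[OF _ d] tensor_eval_minus[OF d d] tensor_eval_delta assms by simp
qed

lemma tensor_eval_delta2:
  assumes "q1 \<in> S" "q2 \<in> S" and r: "r \<in> carrier R"
  shows "tensor_eval R M S (\<lambda>p. delta R q1 p \<ominus> r \<otimes> delta R q2 p) =
    class_rep (snd q1) \<odot>\<^bsub>M\<^esub> fst q1 \<ominus>\<^bsub>M\<^esub> r \<odot>\<^bsub>M\<^esub> (class_rep (snd q2) \<odot>\<^bsub>M\<^esub> fst q2)"
proof -
  have d: "\<forall>p. delta R q p \<in> carrier R" for q by (simp add: delta_closed[OF R.ring_axioms])
  have "\<forall>p. r \<otimes> delta R q2 p \<in> carrier R" using r by (simp add: delta_closed[OF R.ring_axioms])
  then show ?thesis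
    using tensor_eval_minus[OF d] tensor_eval_smult[OF d r] tensor_eval_delta assms by simp
qed

lemma tensor_eval_subset:
  assumes sub: "S' \<subseteq> S" and f: "\<forall>p. f p \<in> carrier R" and z: "\<forall>p\<in>S - S'. f p = \<zero>"
  shows "tensor_eval R M S' f = tensor_eval R M S f"
  unfolding tensor_eval_def
  using S class_rep_closed[OF J] z by (intro M.add.finprod_mono_neutral_cong_left[OF fin sub]) (auto simp: f)

end

end

context plain_module
begin

context
  fixes N and J
  assumes N: "submodule N R M" and J: "ideal J R"
begin

lemma subset_carrier_if_subset_submod:
  "S \<subseteq> N \<times> carrier (residue_module R J) \<Longrightarrow> S \<subseteq> carrier M \<times> carrier (residue_module R J)"
  using submoduleD(1)[OF N] by auto

lemma ideal_smult_mem_of_coeff: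
  "c \<in> J \<Longrightarrow> m \<in> N \<Longrightarrow> c \<odot>\<^bsub>M\<^esub> m \<in> ideal_smult M J N"
  using ideal_smult_mem[OF N] ideal.Icarr[OF J] by blast

lemma tensor_eval_gen_add_left:
  assumes m: "m \<in> N" "m' \<in> N" and u: "u \<in> carrier (residue_module R J)"
  shows "tensor_eval R M {(m \<oplus>\<^bsub>M\<^esub> m', u), (m, u), (m', u)}
    (\<lambda>p. delta R (m \<oplus>\<^bsub>M\<^esub> m', u) p \<ominus> delta R (m, u) p \<ominus> delta R (m', u) p) = \<zero>\<^bsub>M\<^esub>"
proof -
  have c: "m \<in> carrier M" "m' \<in> carrier M" "class_rep u \<in> carrier R"
    using m submoduleD(1)[OF N] class_rep_closed[OF J u] by auto
  have "tensor_eval R M {(m \<oplus>\<^bsub>M\<^esub> m', u), (m, u), (m', u)}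
      (\<lambda>p. delta R (m \<oplus>\<^bsub>M\<^esub> m', u) p \<ominus> delta R (m, u) p \<ominus> delta R (m', u) p) =
    class_rep u \<odot>\<^bsub>M\<^esub> (m \<oplus>\<^bsub>M\<^esub> m') \<ominus>\<^bsub>M\<^esub> class_rep u \<odot>\<^bsub>M\<^esub> m \<ominus>\<^bsub>M\<^esub> class_rep u \<odot>\<^bsub>M\<^esub> m'"
    using c u by (subst tensor_eval_delta3[OF J]) auto
  also have "\<dots> = \<zero>\<^bsub>M\<^esub>"
  proof -
    have "class_rep u \<odot>\<^bsub>M\<^esub> (m \<oplus>\<^bsub>M\<^esub> m') \<ominus>\<^bsub>M\<^esub> class_rep u \<odot>\<^bsub>M\<^esub> m = class_rep u \<odot>\<^bsub>M\<^esub> m'"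
      using c by (simp add: smult_r_distr M.add_minus_cancel_left)
    then show ?thesis using c by (simp add: M.minus_eq M.r_neg)
  qed
  finally show ?thesis .
qed

lemma tensor_eval_gen_add_right:
  assumes m: "m \<in> N" and u: "u \<in> carrier (residue_module R J)" "u' \<in> carrier (residue_module R J)"
  shows "tensor_eval R M {(m, u \<oplus>\<^bsub>residue_module R J\<^esub> u'), (m, u), (m, u')}
    (\<lambda>p. delta R (m, u \<oplus>\<^bsub>residue_module R J\<^esub> u') p \<ominus> delta R (m, u) p \<ominus> delta R (m, u') p)
    \<in> ideal_smult M J N"
proof -
  let ?v = "u \<oplus>\<^bsub>residue_module R J\<^esub> u'"
  have v: "?v = residue_embed R J (class_rep u \<oplus> class_rep u')" unfolding residue_module_def by simp
  have c: "m \<in> carrier M" "class_rep u \<in> carrier R" "class_rep u' \<in> carrier R"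
    using m submoduleD(1)[OF N] class_rep_closed[OF J] u by auto
  then have vc: "?v \<in> carrier (residue_module R J)" "class_rep ?v \<in> carrier R"
    "class_rep ?v \<ominus> (class_rep u \<oplus> class_rep u') \<in> J"
    unfolding v residue_module_carrier using class_rep_residue_embed[OF J] by auto
  have "tensor_eval R M {(m, ?v), (m, u), (m, u')}
      (\<lambda>p. delta R (m, ?v) p \<ominus> delta R (m, u) p \<ominus> delta R (m, u') p) =
    class_rep ?v \<odot>\<^bsub>M\<^esub> m \<ominus>\<^bsub>M\<^esub> class_rep u \<odot>\<^bsub>M\<^esub> m \<ominus>\<^bsub>M\<^esub> class_rep u' \<odot>\<^bsub>M\<^esub> m"
    using c u vc by (subst tensor_eval_delta3[OF J]) auto
  also have "\<dots> = (class_rep ?v \<ominus> (class_rep u \<oplus> class_rep u')) \<odot>\<^bsub>M\<^esub> m"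
  proof -
    have "(class_rep ?v \<ominus> (class_rep u \<oplus> class_rep u')) \<odot>\<^bsub>M\<^esub> m =
        class_rep ?v \<odot>\<^bsub>M\<^esub> m \<ominus>\<^bsub>M\<^esub> (class_rep u \<odot>\<^bsub>M\<^esub> m \<oplus>\<^bsub>M\<^esub> class_rep u' \<odot>\<^bsub>M\<^esub> m)"
      using c vc by (simp add: smult_l_diff smult_l_distr)
    then show ?thesis using c vc by (simp add: M.minus_eq M.minus_add M.a_assoc)
  qed
  finally show ?thesis using ideal_smult_mem_of_coeff[OF vc(3) m] by simp
qed

lemma tensor_eval_gen_smult_left:
  assumes r: "r \<in> carrier R" and m: "m \<in> N" and u: "u \<in> carrier (residue_module R J)"
  shows "tensor_eval R M {(r \<odot>\<^bsub>M\<^esub> m, u), (m, u)}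
    (\<lambda>p. delta R (r \<odot>\<^bsub>M\<^esub> m, u) p \<ominus> r \<otimes> delta R (m, u) p) = \<zero>\<^bsub>M\<^esub>"
proof -
  have c: "m \<in> carrier M" "class_rep u \<in> carrier R"
    using m submoduleD(1)[OF N] class_rep_closed[OF J u] by auto
  have "tensor_eval R M {(r \<odot>\<^bsub>M\<^esub> m, u), (m, u)} (\<lambda>p. delta R (r \<odot>\<^bsub>M\<^esub> m, u) p \<ominus> r \<otimes> delta R (m, u) p) =
    class_rep u \<odot>\<^bsub>M\<^esub> (r \<odot>\<^bsub>M\<^esub> m) \<ominus>\<^bsub>M\<^esub> r \<odot>\<^bsub>M\<^esub> (class_rep u \<odot>\<^bsub>M\<^esub> m)"
    using c r u by (subst tensor_eval_delta2[OF J]) auto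
  also have "\<dots> = \<zero>\<^bsub>M\<^esub>"
    using c r by (simp add: smult_assoc1[symmetric] m_comm a_minus_def M.r_neg)
  finally show ?thesis .
qed

lemma tensor_eval_gen_smult_right:
  assumes r: "r \<in> carrier R" and m: "m \<in> N" and u: "u \<in> carrier (residue_module R J)"
  shows "tensor_eval R M {(m, r \<odot>\<^bsub>residue_module R J\<^esub> u), (m, u)}
    (\<lambda>p. delta R (m, r \<odot>\<^bsub>residue_module R J\<^esub> u) p \<ominus> r \<otimes> delta R (m, u) p) \<in> ideal_smult M J N"
proof -
  let ?v = "r \<odot>\<^bsub>residue_module R J\<^esub> u"
  have v: "?v = residue_embed R J (r \<otimes> class_rep u)" unfolding residue_module_def by simp
  have c: "m \<in> carrier M" "class_rep u \<in> carrier R"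
    using m submoduleD(1)[OF N] class_rep_closed[OF J u] by auto
  then have vc: "?v \<in> carrier (residue_module R J)" "class_rep ?v \<in> carrier R"
    "class_rep ?v \<ominus> r \<otimes> class_rep u \<in> J"
    unfolding v residue_module_carrier using class_rep_residue_embed[OF J] r by auto
  have "tensor_eval R M {(m, ?v), (m, u)} (\<lambda>p. delta R (m, ?v) p \<ominus> r \<otimes> delta R (m, u) p) =
    class_rep ?v \<odot>\<^bsub>M\<^esub> m \<ominus>\<^bsub>M\<^esub> r \<odot>\<^bsub>M\<^esub> (class_rep u \<odot>\<^bsub>M\<^esub> m)"
    using c r u vc by (subst tensor_eval_delta2[OF J]) auto
  also have "\<dots> = (class_rep ?v \<ominus> r \<otimes> class_rep u) \<odot>\<^bsub>M\<^esub> m"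
    using c vc r by (simp add: smult_l_diff smult_assoc1)
  finally show ?thesis using ideal_smult_mem_of_coeff[OF vc(3) m] by simp
qed

lemma tensor_eval_tensor_gen:
  assumes g: "g \<in> tensor_gens R (M\<lparr>carrier := N\<rparr>) (residue_module R J)"
  obtains Q where "finite Q" "Q \<subseteq> N \<times> carrier (residue_module R J)" "\<forall>p. p \<notin> Q \<longrightarrow> g p = \<zero>"
    "tensor_eval R M Q g \<in> ideal_smult M J N"
proof -
  let ?U = "residue_module R J"
  interpret U: module R ?U by (rule residue_module_module[OF J])
  from g consider
    (add_left) m m' u where "g = (\<lambda>p. delta R (m \<oplus>\<^bsub>M\<^esub> m', u) p \<ominus> delta R (m, u) p \<ominus> delta R (m', u) p)"
      "m \<in> N" "m' \<in> N" "u \<in> carrier ?U"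
  | (add_right) m u u' where "g = (\<lambda>p. delta R (m, u \<oplus>\<^bsub>?U\<^esub> u') p \<ominus> delta R (m, u) p \<ominus> delta R (m, u') p)"
      "m \<in> N" "u \<in> carrier ?U" "u' \<in> carrier ?U"
  | (smult_left) r m u where "g = (\<lambda>p. delta R (r \<odot>\<^bsub>M\<^esub> m, u) p \<ominus> r \<otimes> delta R (m, u) p)"
      "r \<in> carrier R" "m \<in> N" "u \<in> carrier ?U"
  | (smult_right) r m u where "g = (\<lambda>p. delta R (m, r \<odot>\<^bsub>?U\<^esub> u) p \<ominus> r \<otimes> delta R (m, u) p)"
      "r \<in> carrier R" "m \<in> N" "u \<in> carrier ?U"
    unfolding tensor_gens_def by auto
  then show thesis
  proof cases
    case add_left
    show thesis
    proof (rule that)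
      show "{(m \<oplus>\<^bsub>M\<^esub> m', u), (m, u), (m', u)} \<subseteq> N \<times> carrier ?U"
        using add_left submoduleD(5)[OF N] by auto
    qed (use add_left tensor_eval_gen_add_left ideal_smult.zero in \<open>auto simp: delta_def a_minus_def\<close>)
  next
    case add_right
    show thesis
    proof (rule that)
      show "{(m, u \<oplus>\<^bsub>?U\<^esub> u'), (m, u), (m, u')} \<subseteq> N \<times> carrier ?U"
        using add_right by auto
    qed (use add_right tensor_eval_gen_add_right in \<open>auto simp: delta_def a_minus_def\<close>)
  next
    case smult_left
    show thesis
    proof (rule that)
      show "{(r \<odot>\<^bsub>M\<^esub> m, u), (m, u)} \<subseteq> N \<times> carrier ?U"
        using smult_left submoduleD(4)[OF N] by auto
    qed (use smult_left tensor_eval_gen_smult_left ideal_smult.zero in \<open>auto simp: delta_def a_minus_def\<close>)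
  next
    case smult_right
    show thesis
    proof (rule that)
      show "{(m, r \<odot>\<^bsub>?U\<^esub> u), (m, u)} \<subseteq> N \<times> carrier ?U"
        using smult_right by auto
    qed (use smult_right tensor_eval_gen_smult_right in \<open>auto simp: delta_def a_minus_def\<close>)
  qed
qed

lemma tensor_eval_fun_span:
  assumes "f \<in> fun_span R (tensor_gens R (M\<lparr>carrier := N\<rparr>) (residue_module R J))"
  shows "finite {p. f p \<noteq> \<zero>} \<and> {p. f p \<noteq> \<zero>} \<subseteq> N \<times> carrier (residue_module R J) \<and>
    tensor_eval R M {p. f p \<noteq> \<zero>} f \<in> ideal_smult M J N"
  using assms
proof induction
  case zero
  show ?case using ideal_smult.zero by (simp add: tensor_eval_def)
next
  case (step f c g)
  let ?U = "residue_module R J"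
  let ?h = "\<lambda>p. f p \<oplus> c \<otimes> g p"
  note G = tensor_gens_closed[OF R.ring_axioms]
  have fv: "\<forall>p. f p \<in> carrier R" using fun_span_closed[OF R.ring_axioms G step.hyps(1)] by blast
  have gv: "\<forall>p. g p \<in> carrier R" using G step.hyps(3) by blast
  have cg: "\<forall>p. c \<otimes> g p \<in> carrier R" and hv: "\<forall>p. ?h p \<in> carrier R" using fv gv step.hyps(2) by auto
  obtain Q where Q: "finite Q" "Q \<subseteq> N \<times> carrier ?U" "\<forall>p. p \<notin> Q \<longrightarrow> g p = \<zero>"
    "tensor_eval R M Q g \<in> ideal_smult M J N"
    by (rule tensor_eval_tensor_gen[OF step.hyps(3)])
  define S where "S = {p. f p \<noteq> \<zero>} \<union> Q"
  have S: "finite S" "S \<subseteq> N \<times> carrier ?U" using step.IH Q unfolding S_def by auto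
  note SM = subset_carrier_if_subset_submod[OF S(2)]
  have supp: "{p. ?h p \<noteq> \<zero>} \<subseteq> S" using Q(3) step.hyps(2) unfolding S_def by auto
  have "tensor_eval R M {p. ?h p \<noteq> \<zero>} ?h = tensor_eval R M S ?h"
    using supp hv by (intro tensor_eval_subset[OF J SM S(1)]) auto
  also have "\<dots> = tensor_eval R M S f \<oplus>\<^bsub>M\<^esub> c \<odot>\<^bsub>M\<^esub> tensor_eval R M S g"
    using tensor_eval_add[OF J SM S(1) fv cg] tensor_eval_smult[OF J SM S(1) gv step.hyps(2)] by simp
  also have "tensor_eval R M S f = tensor_eval R M {p. f p \<noteq> \<zero>} f"
    using fv by (intro tensor_eval_subset[OF J SM S(1), symmetric]) (auto simp: S_def)
  also have "tensor_eval R M S g = tensor_eval R M Q g"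
    using gv Q(3) by (intro tensor_eval_subset[OF J SM S(1), symmetric]) (auto simp: S_def)
  finally have eval: "tensor_eval R M {p. ?h p \<noteq> \<zero>} ?h =
      tensor_eval R M {p. f p \<noteq> \<zero>} f \<oplus>\<^bsub>M\<^esub> c \<odot>\<^bsub>M\<^esub> tensor_eval R M Q g" .
  have "c \<odot>\<^bsub>M\<^esub> tensor_eval R M Q g \<in> ideal_smult M J N"
    using ideal_smult_smult[OF Q(4) J N step.hyps(2)] .
  from ideal_smult_add[OF this _ N subsetI[OF ideal.Icarr[OF J]]] step.IH
  have "tensor_eval R M {p. ?h p \<noteq> \<zero>} ?h \<in> ideal_smult M J N" unfolding eval by blast
  moreover have "finite {p. ?h p \<noteq> \<zero>}" using finite_subset[OF supp S(1)] .
  moreover have "{p. ?h p \<noteq> \<zero>} \<subseteq> N \<times> carrier ?U" using supp S(2) by (rule order_trans)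
  ultimately show ?case by blast
qed

end

lemma pure_sub_ideal_smult:
  assumes P: "pure_sub R M N" and J: "ideal J R"
    and xN: "x \<in> N" and xJ: "x \<in> ideal_smult M J (carrier M)"
  shows "x \<in> ideal_smult M J N"
proof -
  let ?U = "residue_module R J" and ?u = "residue_embed R J \<one>"
  let ?f = "delta R (x, ?u)"
  have N: "submodule N R M" using P unfolding pure_sub_def by blast
  have u: "?u \<in> carrier ?U" "class_rep ?u \<in> carrier R" "class_rep ?u \<ominus> \<one> \<in> J"
    unfolding residue_module_carrier using class_rep_residue_embed[OF J] by auto
  have x: "x \<in> carrier M" using xN submoduleD(1)[OF N] by blast
  have fv: "\<forall>p. ?f p \<in> carrier R" by (simp add: delta_closed[OF R.ring_axioms])
  have supp: "{p. ?f p \<noteq> \<zero>} \<subseteq> {(x, ?u)}" unfolding delta_def by auto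
  note pure = conjunct2[OF P[unfolded pure_sub_def], rule_format, OF residue_module_module[OF J]]
  have "tensor_zero R (M\<lparr>carrier := N\<rparr>) ?U ?f"
  proof (rule pure)
    show "(\<forall>p. ?f p \<in> carrier R) \<and> finite {p. ?f p \<noteq> \<zero>} \<and> {p. ?f p \<noteq> \<zero>} \<subseteq> N \<times> carrier ?U"
      using fv finite_subset[OF supp] supp xN u(1) by auto
    show "tensor_zero R M ?U ?f" by (rule tensor_zero_ideal_smult[OF J xJ])
  qed
  then have "tensor_eval R M {p. ?f p \<noteq> \<zero>} ?f \<in> ideal_smult M J N"
    unfolding tensor_zero_def using tensor_eval_fun_span[OF N J] by blast
  moreover have "tensor_eval R M {p. ?f p \<noteq> \<zero>} ?f = tensor_eval R M {(x, ?u)} ?f"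
    using supp fv x u by (intro tensor_eval_subset[OF J]) auto
  moreover have "tensor_eval R M {(x, ?u)} ?f = class_rep ?u \<odot>\<^bsub>M\<^esub> x"
    using tensor_eval_delta[OF J, of "{(x, ?u)}" "(x, ?u)"] x u by simp
  ultimately have "class_rep ?u \<odot>\<^bsub>M\<^esub> x \<in> ideal_smult M J N" by simp
  moreover have "(class_rep ?u \<ominus> \<one>) \<odot>\<^bsub>M\<^esub> x \<in> ideal_smult M J N"
    using ideal_smult_mem[OF N u(3) xN subsetI[OF ideal.Icarr[OF J]]] by blast
  moreover have "x = class_rep ?u \<odot>\<^bsub>M\<^esub> x \<ominus>\<^bsub>M\<^esub> (class_rep ?u \<ominus> \<one>) \<odot>\<^bsub>M\<^esub> x"
  proof -
    have "(class_rep ?u \<ominus> \<one>) \<odot>\<^bsub>M\<^esub> x = class_rep ?u \<odot>\<^bsub>M\<^esub> x \<ominus>\<^bsub>M\<^esub> x"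
      using x u by (simp add: smult_l_diff)
    then show ?thesis using x u by (simp add: M.minus_eq M.minus_add M.minus_minus M.r_neg2)
  qed
  ultimately show ?thesis using submoduleD(6)[OF ideal_smult_submodule[OF J N]] by metis
qed

end

section \<open>The chains \<open>a N + (a P) M\<close>\<close>

definition scaled_ideal :: "('r, 'm) ring_scheme \<Rightarrow> 'r \<Rightarrow> 'r set \<Rightarrow> 'r set" where
  "scaled_ideal R a P = {a \<otimes>\<^bsub>R\<^esub> p | p. p \<in> P}"

definition scaled_submod :: "('r, 'm) ring_scheme \<Rightarrow> ('r, 'a, 'e) module_scheme \<Rightarrow> 'r \<Rightarrow> 'r set \<Rightarrow> 'a set \<Rightarrow> 'a set" where
  "scaled_submod R M a P N = smult_set M a N <+>\<^bsub>M\<^esub> ideal_smult M (scaled_ideal R a P) (carrier M)"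

lemma (in cring) scaled_ideal_ideal:
  assumes P: "ideal P R" and a: "a \<in> carrier R"
  shows "ideal (scaled_ideal R a P) R"
proof (rule idealI_cring)
  interpret P: ideal P R by fact
  show "scaled_ideal R a P \<subseteq> carrier R" unfolding scaled_ideal_def using a P.Icarr by auto
  have "\<zero> = a \<otimes> \<zero>" using a by simp
  then show "\<zero> \<in> scaled_ideal R a P" unfolding scaled_ideal_def using P.zero_closed by blast
  fix x y assume "x \<in> scaled_ideal R a P"
  then obtain p where p: "p \<in> P" "x = a \<otimes> p" unfolding scaled_ideal_def by blast
  have pc: "p \<in> carrier R" using p P.Icarr by blast
  show "r \<otimes> x \<in> scaled_ideal R a P" if r: "r \<in> carrier R" for r
  proof -
    have "r \<otimes> x = a \<otimes> (r \<otimes> p)" using p pc a r by (simp add: m_lcomm)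
    then show ?thesis unfolding scaled_ideal_def using P.I_l_closed[OF p(1) r] by blast
  qed
  assume "y \<in> scaled_ideal R a P"
  then obtain q where q: "q \<in> P" "y = a \<otimes> q" unfolding scaled_ideal_def by blast
  have "x \<oplus> y = a \<otimes> (p \<oplus> q)" using p q pc P.Icarr a by (simp add: r_distr)
  then show "x \<oplus> y \<in> scaled_ideal R a P" unfolding scaled_ideal_def using P.a_closed[OF p(1) q(1)] by blast
qed

context module
begin

context
  fixes P and a
  assumes P: "ideal P R" and a: "a \<in> carrier R"
begin

lemma scaled_ideal_subset: "scaled_ideal R a P \<subseteq> carrier R"
  using ideal.Icarr[OF scaled_ideal_ideal[OF P a]] by blast

lemma scaled_submod_submodule: "submodule X R M \<Longrightarrow> submodule (scaled_submod R M a P X) R M"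
  unfolding scaled_submod_def
  by (intro set_add_submodule smult_set_submodule ideal_smult_submodule scaled_ideal_ideal P a
      carrier_is_submodule)

lemma smult_mem_scaled_submod:
  assumes X: "submodule X R M" and x: "x \<in> X"
  shows "a \<odot>\<^bsub>M\<^esub> x \<in> scaled_submod R M a P X"
proof -
  have "a \<odot>\<^bsub>M\<^esub> x \<in> smult_set M a X" unfolding smult_set_def using x by blast
  then show ?thesis unfolding scaled_submod_def
    using set_add_upper1[OF ideal_smult_submodule[OF scaled_ideal_ideal[OF P a] carrier_is_submodule]]
      smult_set_submodule[OF a X] submoduleD(1) by blast
qed

lemma scaled_ideal_smult_mem_scaled_submod:
  assumes X: "submodule X R M" and p: "p \<in> P" and x: "x \<in> carrier M"
  shows "(a \<otimes> p) \<odot>\<^bsub>M\<^esub> x \<in> scaled_submod R M a P X"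
proof -
  have "a \<otimes> p \<in> scaled_ideal R a P" unfolding scaled_ideal_def using p by blast
  then have "(a \<otimes> p) \<odot>\<^bsub>M\<^esub> x \<in> ideal_smult M (scaled_ideal R a P) (carrier M)"
    using ideal_smult_mem[OF carrier_is_submodule _ x scaled_ideal_subset] by blast
  then show ?thesis unfolding scaled_submod_def
    using set_add_upper2[OF smult_set_submodule[OF a X]]
      ideal_smult_submodule[OF scaled_ideal_ideal[OF P a] carrier_is_submodule] submoduleD(1) by blast
qed

lemma scaled_submod_annihilated:
  assumes X: "submodule X R M" and g: "g \<in> carrier M" and p: "p \<in> P"
  shows "p \<odot>\<^bsub>M\<^esub> (a \<odot>\<^bsub>M\<^esub> g) \<in> scaled_submod R M a P X"
proof -
  have "p \<in> carrier R" using p ideal.Icarr[OF P] by blast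
  then have "p \<odot>\<^bsub>M\<^esub> (a \<odot>\<^bsub>M\<^esub> g) = (a \<otimes> p) \<odot>\<^bsub>M\<^esub> g" using a g by (simp add: smult_assoc1[symmetric] m_comm)
  then show ?thesis using scaled_ideal_smult_mem_scaled_submod[OF X p g] by simp
qed

lemma ideal_smult_subset_scaled_submod:
  assumes X: "submodule X R M"
  shows "ideal_smult M (scaled_ideal R a P) (carrier M) \<subseteq> scaled_submod R M a P X"
  unfolding scaled_submod_def
  using set_add_upper2[OF smult_set_submodule[OF a X]]
    submoduleD(1)[OF ideal_smult_submodule[OF scaled_ideal_ideal[OF P a] carrier_is_submodule]] .

lemma scaled_submod_set_add_cyclic:
  assumes N: "submodule N R M" and g: "g \<in> carrier M"
  shows "scaled_submod R M a P (N <+>\<^bsub>M\<^esub> cyclic_submod R M g) =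
    scaled_submod R M a P N <+>\<^bsub>M\<^esub> cyclic_submod R M (a \<odot>\<^bsub>M\<^esub> g)"
    (is "?T' = ?T <+>\<^bsub>M\<^esub> ?C")
proof
  let ?N' = "N <+>\<^bsub>M\<^esub> cyclic_submod R M g"
  have N': "submodule ?N' R M" using set_add_submodule[OF N cyclic_submod_submodule[OF g]] .
  have ag: "a \<odot>\<^bsub>M\<^esub> g \<in> carrier M" using a g by simp
  have T: "submodule ?T R M" and T': "submodule ?T' R M" using scaled_submod_submodule N N' by auto
  have C: "submodule ?C R M" using cyclic_submod_submodule[OF ag] .
  have K: "submodule (?T <+>\<^bsub>M\<^esub> ?C) R M" using set_add_submodule[OF T C] .
  have TK: "?T \<subseteq> ?T <+>\<^bsub>M\<^esub> ?C" and CK: "?C \<subseteq> ?T <+>\<^bsub>M\<^esub> ?C"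
    using set_add_upper1[OF C submoduleD(1)[OF T]] set_add_upper2[OF T submoduleD(1)[OF C]] .
  have "smult_set M a ?N' \<subseteq> ?T <+>\<^bsub>M\<^esub> ?C"
  proof
    fix x assume "x \<in> smult_set M a ?N'"
    then obtain y where y: "y \<in> ?N'" "x = a \<odot>\<^bsub>M\<^esub> y" unfolding smult_set_def by blast
    from y(1) obtain n z where nz: "y = n \<oplus>\<^bsub>M\<^esub> z" "n \<in> N" "z \<in> cyclic_submod R M g"
      by (rule set_add_memE)
    then obtain r where r: "r \<in> carrier R" "z = r \<odot>\<^bsub>M\<^esub> g" unfolding cyclic_submod_def by blast
    have "n \<in> carrier M" using nz submoduleD(1)[OF N] by blast
    then have "x = a \<odot>\<^bsub>M\<^esub> n \<oplus>\<^bsub>M\<^esub> r \<odot>\<^bsub>M\<^esub> (a \<odot>\<^bsub>M\<^esub> g)"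
      using y nz r a g by (simp add: smult_r_distr smult_assoc1[symmetric] m_comm)
    moreover have "a \<odot>\<^bsub>M\<^esub> n \<in> ?T <+>\<^bsub>M\<^esub> ?C" using smult_mem_scaled_submod[OF N nz(2)] TK by blast
    moreover have "r \<odot>\<^bsub>M\<^esub> (a \<odot>\<^bsub>M\<^esub> g) \<in> ?T <+>\<^bsub>M\<^esub> ?C"
      using CK r(1) unfolding cyclic_submod_def by blast
    ultimately show "x \<in> ?T <+>\<^bsub>M\<^esub> ?C" using submoduleD(5)[OF K] by simp
  qed
  moreover have "ideal_smult M (scaled_ideal R a P) (carrier M) \<subseteq> ?T <+>\<^bsub>M\<^esub> ?C"
    using ideal_smult_subset_scaled_submod[OF N] TK by (rule order_trans)
  ultimately show "?T' \<subseteq> ?T <+>\<^bsub>M\<^esub> ?C"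
    unfolding scaled_submod_def[of R M a P ?N'] by (rule set_add_least[OF K])
  have NN': "N \<subseteq> ?N'" using set_add_upper1[OF cyclic_submod_submodule[OF g] submoduleD(1)[OF N]] .
  have gN': "g \<in> ?N'"
    using set_add_upper2[OF N submoduleD(1)[OF cyclic_submod_submodule[OF g]]] cyclic_submod_self[OF g] by blast
  have "smult_set M a N \<subseteq> ?T'" unfolding smult_set_def using smult_mem_scaled_submod[OF N'] NN' by blast
  then have "?T \<subseteq> ?T'"
    unfolding scaled_submod_def[of R M a P N] by (rule set_add_least[OF T' _ ideal_smult_subset_scaled_submod[OF N']])
  moreover have "?C \<subseteq> ?T'" using cyclic_submod_subset[OF T' smult_mem_scaled_submod[OF N' gN']] .
  ultimately show "?T <+>\<^bsub>M\<^esub> ?C \<subseteq> ?T'" using set_add_least[OF T'] by blast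
qed

end

end

context module
begin

lemma maximalideal_cancel_mem:
  assumes P: "maximalideal P R" and Z: "submodule Z R M" and y: "y \<in> carrier M"
    and Py: "\<forall>p\<in>P. p \<odot>\<^bsub>M\<^esub> y \<in> Z" and r: "r \<in> carrier R" "r \<notin> P" "r \<odot>\<^bsub>M\<^esub> y \<in> Z"
  shows "y \<in> Z"
proof -
  obtain s where s: "s \<in> carrier R" "s \<otimes> r \<ominus> \<one> \<in> P" using maximalideal_inverse_mod[OF P r(1,2)] by blast
  have "(s \<otimes> r) \<odot>\<^bsub>M\<^esub> y \<in> Z" using submoduleD(4)[OF Z s(1) r(3)] s r y by (simp add: smult_assoc1)
  moreover have "(s \<otimes> r \<ominus> \<one>) \<odot>\<^bsub>M\<^esub> y \<in> Z" using Py s(2) by blast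
  moreover have "y = (s \<otimes> r) \<odot>\<^bsub>M\<^esub> y \<ominus>\<^bsub>M\<^esub> (s \<otimes> r \<ominus> \<one>) \<odot>\<^bsub>M\<^esub> y"
  proof -
    have "(s \<otimes> r) \<ominus> (s \<otimes> r \<ominus> \<one>) = \<one>" using s r by algebra
    then show ?thesis using smult_l_diff[of "s \<otimes> r" "s \<otimes> r \<ominus> \<one>" y] s r y by simp
  qed
  ultimately show ?thesis using submoduleD(6)[OF Z] by metis
qed

lemma ideal_smult_PIdl_obtain:
  assumes N: "submodule N R M" and a: "a \<in> carrier R" and x: "x \<in> ideal_smult M (PIdl a) N"
  obtains n where "n \<in> N" "x = a \<odot>\<^bsub>M\<^esub> n"
proof -
  from x have "\<exists>n\<in>N. x = a \<odot>\<^bsub>M\<^esub> n"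
  proof induction
    case zero
    have "\<zero>\<^bsub>M\<^esub> = a \<odot>\<^bsub>M\<^esub> \<zero>\<^bsub>M\<^esub>" using a by simp
    then show ?case using submoduleD(2)[OF N] by blast
  next
    case (add_smult x j y)
    obtain n where n: "n \<in> N" "x = a \<odot>\<^bsub>M\<^esub> n" using add_smult.IH by blast
    obtain s where s: "s \<in> carrier R" "j = s \<otimes> a" using add_smult.hyps(2) unfolding cgenideal_def by blast
    have "n \<in> carrier M" "y \<in> carrier M" using n add_smult.hyps(3) submoduleD(1)[OF N] by auto
    then have "x \<oplus>\<^bsub>M\<^esub> j \<odot>\<^bsub>M\<^esub> y = a \<odot>\<^bsub>M\<^esub> (n \<oplus>\<^bsub>M\<^esub> s \<odot>\<^bsub>M\<^esub> y)"
      using n s a by (simp add: smult_r_distr smult_assoc1[symmetric] m_comm)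
    moreover have "n \<oplus>\<^bsub>M\<^esub> s \<odot>\<^bsub>M\<^esub> y \<in> N" using submoduleD(4,5)[OF N] n s add_smult.hyps(3) by blast
    ultimately show ?case by blast
  qed
  then show thesis using that by blast
qed

lemma ideal_smult_scaled_ideal_obtain:
  assumes N: "submodule N R M" and P: "ideal P R" and a: "a \<in> carrier R" and g: "g \<in> carrier M"
    and w: "w \<in> ideal_smult M (scaled_ideal R a P) (N <+>\<^bsub>M\<^esub> cyclic_submod R M g)"
  obtains p where "p \<in> P" "w \<ominus>\<^bsub>M\<^esub> (a \<otimes> p) \<odot>\<^bsub>M\<^esub> g \<in> N"
proof -
  interpret P: ideal P R by fact
  have N': "submodule (N <+>\<^bsub>M\<^esub> cyclic_submod R M g) R M"
    using set_add_submodule[OF N cyclic_submod_submodule[OF g]] .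
  from w have "\<exists>p\<in>P. w \<ominus>\<^bsub>M\<^esub> (a \<otimes> p) \<odot>\<^bsub>M\<^esub> g \<in> N"
  proof induction
    case zero
    have "\<zero>\<^bsub>M\<^esub> \<ominus>\<^bsub>M\<^esub> (a \<otimes> \<zero>) \<odot>\<^bsub>M\<^esub> g = \<zero>\<^bsub>M\<^esub>" using a g by (simp add: a_minus_def)
    then show ?case using submoduleD(2)[OF N] P.zero_closed by metis
  next
    case (add_smult w j y)
    obtain p where p: "p \<in> P" "w \<ominus>\<^bsub>M\<^esub> (a \<otimes> p) \<odot>\<^bsub>M\<^esub> g \<in> N" using add_smult.IH by blast
    obtain p' where p': "p' \<in> P" "j = a \<otimes> p'" using add_smult.hyps(2) unfolding scaled_ideal_def by blast
    from add_smult.hyps(3) obtain n z where nz: "y = n \<oplus>\<^bsub>M\<^esub> z" "n \<in> N" "z \<in> cyclic_submod R M g"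
      by (rule set_add_memE)
    then obtain r where r: "r \<in> carrier R" "z = r \<odot>\<^bsub>M\<^esub> g" unfolding cyclic_submod_def by blast
    have pc: "p \<in> carrier R" "p' \<in> carrier R" using p p' P.Icarr by auto
    have nc: "n \<in> carrier M" using nz submoduleD(1)[OF N] by blast
    have wc: "w \<in> carrier M"
      using add_smult.hyps(1) ideal_smult_subset[OF N' scaled_ideal_subset[OF P a]] submoduleD(1)[OF N'] by blast
    define q where "q = p \<oplus> p' \<otimes> r"
    have q: "q \<in> P" unfolding q_def using p p' r P.I_r_closed P.a_closed by auto
    have "w \<oplus>\<^bsub>M\<^esub> j \<odot>\<^bsub>M\<^esub> y \<ominus>\<^bsub>M\<^esub> (a \<otimes> q) \<odot>\<^bsub>M\<^esub> g = (w \<ominus>\<^bsub>M\<^esub> (a \<otimes> p) \<odot>\<^bsub>M\<^esub> g) \<oplus>\<^bsub>M\<^esub> j \<odot>\<^bsub>M\<^esub> n"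
    proof -
      have jy: "j \<odot>\<^bsub>M\<^esub> y = j \<odot>\<^bsub>M\<^esub> n \<oplus>\<^bsub>M\<^esub> (a \<otimes> p' \<otimes> r) \<odot>\<^bsub>M\<^esub> g"
        using nz r nc g p' pc a by (simp add: smult_r_distr smult_assoc1)
      have "a \<otimes> q = a \<otimes> p \<oplus> a \<otimes> p' \<otimes> r" unfolding q_def using a pc r by algebra
      then have aq: "(a \<otimes> q) \<odot>\<^bsub>M\<^esub> g = (a \<otimes> p) \<odot>\<^bsub>M\<^esub> g \<oplus>\<^bsub>M\<^esub> (a \<otimes> p' \<otimes> r) \<odot>\<^bsub>M\<^esub> g"
        using a pc r g by (simp add: smult_l_distr)
      have "j \<odot>\<^bsub>M\<^esub> n \<in> carrier M" "(a \<otimes> p' \<otimes> r) \<odot>\<^bsub>M\<^esub> g \<in> carrier M" "(a \<otimes> p) \<odot>\<^bsub>M\<^esub> g \<in> carrier M"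
        using nc p' pc a r g by auto
      then show ?thesis unfolding jy aq using wc
        by (simp add: a_minus_def M.minus_add M.a_ac M.r_neg1 M.r_neg2 M.r_neg)
    qed
    moreover have "j \<odot>\<^bsub>M\<^esub> n \<in> N" using submoduleD(4)[OF N _ nz(2)] p' pc a by simp
    then have "(w \<ominus>\<^bsub>M\<^esub> (a \<otimes> p) \<odot>\<^bsub>M\<^esub> g) \<oplus>\<^bsub>M\<^esub> j \<odot>\<^bsub>M\<^esub> n \<in> N" using submoduleD(5)[OF N p(2)] by blast
    ultimately have "w \<oplus>\<^bsub>M\<^esub> j \<odot>\<^bsub>M\<^esub> y \<ominus>\<^bsub>M\<^esub> (a \<otimes> q) \<odot>\<^bsub>M\<^esub> g \<in> N" by simp
    then show ?case using q by blast
  qed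
  then show thesis using that by blast
qed

end

context plain_module
begin

lemma set_add_cyclic_covers:
  assumes P: "maximalideal P R" and L: "submodule L R M" and y: "y \<in> carrier M"
    and Py: "\<forall>p\<in>P. p \<odot>\<^bsub>M\<^esub> y \<in> L"
  shows "L <+>\<^bsub>M\<^esub> cyclic_submod R M y = L \<or> L.covers L (L <+>\<^bsub>M\<^esub> cyclic_submod R M y)"
proof (cases "y \<in> L")
  case True
  then show ?thesis using set_add_cyclic_eq_iff[OF L y] by simp
next
  case False
  let ?K = "L <+>\<^bsub>M\<^esub> cyclic_submod R M y"
  have LK: "L \<subseteq> ?K" using set_add_upper1[OF cyclic_submod_submodule[OF y] submoduleD(1)[OF L]] .
  have yK: "y \<in> ?K"
    using set_add_upper2[OF L submoduleD(1)[OF cyclic_submod_submodule[OF y]]] cyclic_submod_self[OF y] by blast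
  have "L.covers L ?K"
    unfolding L.covers_def
  proof (intro conjI ballI impI)
    show "L \<subset> ?K" using LK yK False by auto
    fix Z assume "Z \<in> {X. submodule X R M}" and LZ: "L \<subseteq> Z \<and> Z \<subseteq> ?K"
    then have Z: "submodule Z R M" by simp
    show "Z = L \<or> Z = ?K"
    proof (cases "Z \<subseteq> L")
      case True
      then show ?thesis using LZ by blast
    next
      case False
      then obtain z where z: "z \<in> Z" "z \<notin> L" by blast
      then obtain l w where lw: "z = l \<oplus>\<^bsub>M\<^esub> w" "l \<in> L" "w \<in> cyclic_submod R M y"
        using LZ by (blast elim: set_add_memE)
      then obtain r where r: "r \<in> carrier R" "w = r \<odot>\<^bsub>M\<^esub> y" unfolding cyclic_submod_def by blast
      have "r \<notin> P" using z lw r Py submoduleD(5)[OF L] by blast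
      moreover have "r \<odot>\<^bsub>M\<^esub> y \<in> Z"
      proof -
        have "l \<in> carrier M" using lw submoduleD(1)[OF L] by blast
        then have "r \<odot>\<^bsub>M\<^esub> y = z \<ominus>\<^bsub>M\<^esub> l" using lw r y by (simp add: M.add_minus_cancel_left)
        then show ?thesis using submoduleD(6)[OF Z] z(1) lw(2) LZ by auto
      qed
      ultimately have "y \<in> Z" using maximalideal_cancel_mem[OF P Z y] Py LZ r(1) by blast
      then have "?K \<subseteq> Z" using set_add_least[OF Z _ cyclic_submod_subset[OF Z]] LZ by blast
      then show ?thesis using LZ by blast
    qed
  qed
  then show ?thesis by simp
qed

lemma smult_mem_scaled_submodD:
  assumes P: "maximalideal P R" and a: "a \<in> carrier R" and N: "submodule N R M" and g: "g \<in> carrier M"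
    and N': "pure_sub R M (N <+>\<^bsub>M\<^esub> cyclic_submod R M g)"
    and ag: "a \<odot>\<^bsub>M\<^esub> g \<in> scaled_submod R M a P N"
  obtains r where "r \<in> carrier R" "r \<notin> P" "(r \<otimes> a) \<odot>\<^bsub>M\<^esub> g \<in> N"
proof -
  interpret P: maximalideal P R by fact
  let ?N' = "N <+>\<^bsub>M\<^esub> cyclic_submod R M g"
  have N's: "submodule ?N' R M" using set_add_submodule[OF N cyclic_submod_submodule[OF g]] .
  have NN': "N \<subseteq> ?N'" using set_add_upper1[OF cyclic_submod_submodule[OF g] submoduleD(1)[OF N]] .
  have gN': "g \<in> ?N'"
    using set_add_upper2[OF N submoduleD(1)[OF cyclic_submod_submodule[OF g]]] cyclic_submod_self[OF g] by blast
  from ag obtain v w where vw: "a \<odot>\<^bsub>M\<^esub> g = v \<oplus>\<^bsub>M\<^esub> w" "v \<in> smult_set M a N"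
    "w \<in> ideal_smult M (scaled_ideal R a P) (carrier M)"
    unfolding scaled_submod_def by (rule set_add_memE)
  then obtain n where n: "n \<in> N" "v = a \<odot>\<^bsub>M\<^esub> n" unfolding smult_set_def by blast
  have nc: "n \<in> carrier M" using n submoduleD(1)[OF N] by blast
  have wc: "w \<in> carrier M"
    using vw(3) ideal_smult_subset[OF carrier_is_submodule scaled_ideal_subset[OF P.is_ideal a]] by blast
  have w: "w = a \<odot>\<^bsub>M\<^esub> g \<ominus>\<^bsub>M\<^esub> a \<odot>\<^bsub>M\<^esub> n" using vw(1) n nc wc a by (simp add: M.add_minus_cancel_left)
  then have "w \<in> ?N'" using submoduleD(4,6)[OF N's] a gN' NN' n(1) by auto
  then have "w \<in> ideal_smult M (scaled_ideal R a P) ?N'"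
    using pure_sub_ideal_smult[OF N' scaled_ideal_ideal[OF P.is_ideal a]] vw(3) by blast
  then obtain p where p: "p \<in> P" "w \<ominus>\<^bsub>M\<^esub> (a \<otimes> p) \<odot>\<^bsub>M\<^esub> g \<in> N"
    by (rule ideal_smult_scaled_ideal_obtain[OF N P.is_ideal a g])
  have pc: "p \<in> carrier R" using p P.Icarr by blast
  show thesis
  proof (rule that)
    show "\<one> \<ominus> p \<in> carrier R" using pc by simp
    show "\<one> \<ominus> p \<notin> P"
    proof
      assume "\<one> \<ominus> p \<in> P"
      moreover have "(\<one> \<ominus> p) \<oplus> p = \<one>" using pc by algebra
      ultimately show False using P.a_closed[OF _ p(1)] P.I_notcarr P.one_imp_carrier by metis
    qed
    have "((\<one> \<ominus> p) \<otimes> a) \<odot>\<^bsub>M\<^esub> g = (w \<ominus>\<^bsub>M\<^esub> (a \<otimes> p) \<odot>\<^bsub>M\<^esub> g) \<oplus>\<^bsub>M\<^esub> a \<odot>\<^bsub>M\<^esub> n"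
    proof -
      have "(\<one> \<ominus> p) \<otimes> a = a \<ominus> a \<otimes> p" using a pc by algebra
      then have "((\<one> \<ominus> p) \<otimes> a) \<odot>\<^bsub>M\<^esub> g = a \<odot>\<^bsub>M\<^esub> g \<ominus>\<^bsub>M\<^esub> (a \<otimes> p) \<odot>\<^bsub>M\<^esub> g"
        using smult_l_diff a pc g by simp
      then show ?thesis using vw(1) n nc wc a pc g by (simp add: a_minus_def M.a_ac)
    qed
    then show "((\<one> \<ominus> p) \<otimes> a) \<odot>\<^bsub>M\<^esub> g \<in> N" using submoduleD(4,5)[OF N] p(2) a n(1) by simp
  qed
qed

lemma smult_mem_scaled_submodI:
  assumes P: "maximalideal P R" and a: "a \<in> carrier R" and N: "pure_sub R M N" and g: "g \<in> carrier M"
    and r: "r \<in> carrier R" "r \<notin> P" "(r \<otimes> a) \<odot>\<^bsub>M\<^esub> g \<in> N"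
  shows "a \<odot>\<^bsub>M\<^esub> g \<in> scaled_submod R M a P N"
proof -
  interpret P: maximalideal P R by fact
  have Ns: "submodule N R M" using N unfolding pure_sub_def by blast
  have T: "submodule (scaled_submod R M a P N) R M" using scaled_submod_submodule[OF P.is_ideal a Ns] .
  have ag: "a \<odot>\<^bsub>M\<^esub> g \<in> carrier M" using a g by simp
  have "r \<otimes> a \<in> PIdl a" unfolding cgenideal_def using r(1) by blast
  then have "(r \<otimes> a) \<odot>\<^bsub>M\<^esub> g \<in> ideal_smult M (PIdl a) (carrier M)"
    using ideal_smult_mem[OF carrier_is_submodule _ g] ideal.Icarr[OF cgenideal_ideal[OF a]] by blast
  then have "(r \<otimes> a) \<odot>\<^bsub>M\<^esub> g \<in> ideal_smult M (PIdl a) N"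
    using pure_sub_ideal_smult[OF N cgenideal_ideal[OF a] r(3)] by blast
  then obtain n where n: "n \<in> N" "(r \<otimes> a) \<odot>\<^bsub>M\<^esub> g = a \<odot>\<^bsub>M\<^esub> n"
    by (rule ideal_smult_PIdl_obtain[OF Ns a])
  have "r \<odot>\<^bsub>M\<^esub> (a \<odot>\<^bsub>M\<^esub> g) = a \<odot>\<^bsub>M\<^esub> n" using n(2) r(1) a g by (simp add: smult_assoc1)
  then have "r \<odot>\<^bsub>M\<^esub> (a \<odot>\<^bsub>M\<^esub> g) \<in> scaled_submod R M a P N"
    using smult_mem_scaled_submod[OF P.is_ideal a Ns n(1)] by simp
  then show ?thesis
    using maximalideal_cancel_mem[OF P T ag] scaled_submod_annihilated[OF P.is_ideal a Ns g] r(1,2) by blast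
qed

end

section \<open>Cyclic factors\<close>

lemma quot_mod_carrier: "carrier (quot_mod R (M\<lparr>carrier := X\<rparr>) H) = (\<lambda>x. H +>\<^bsub>M\<^esub> x) ` X"
  by (auto simp: quot_mod_def A_RCOSETS_def' a_r_coset_def')

lemma quot_mod_zero: "\<zero>\<^bsub>quot_mod R (M\<lparr>carrier := X\<rparr>) H\<^esub> = H"
  unfolding quot_mod_def by simp

lemma quot_mod_add: "U \<oplus>\<^bsub>quot_mod R (M\<lparr>carrier := X\<rparr>) H\<^esub> V = U <+>\<^bsub>M\<^esub> V"
  unfolding quot_mod_def set_add_def set_mult_def by simp

lemma quot_mod_smult: "r \<odot>\<^bsub>quot_mod R (M\<lparr>carrier := X\<rparr>) H\<^esub> U = H +>\<^bsub>M\<^esub> (r \<odot>\<^bsub>M\<^esub> rep U)"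
  unfolding quot_mod_def a_r_coset_def r_coset_def by simp

definition colon_submod :: "('r, 'm) ring_scheme \<Rightarrow> ('r, 'a, 'e) module_scheme \<Rightarrow> 'a set \<Rightarrow> 'a \<Rightarrow> 'r set" where
  "colon_submod R M N g = {r \<in> carrier R. r \<odot>\<^bsub>M\<^esub> g \<in> N}"

definition generates_mod :: "('r, 'm) ring_scheme \<Rightarrow> ('r, 'a, 'e) module_scheme \<Rightarrow> 'a set \<Rightarrow> 'a set \<Rightarrow> 'a \<Rightarrow> bool" where
  "generates_mod R M N N' g \<longleftrightarrow> g \<in> carrier M \<and> N' = N <+>\<^bsub>M\<^esub> cyclic_submod R M g"

context module
begin

lemma colon_submod_ideal:
  assumes N: "submodule N R M" and g: "g \<in> carrier M"
  shows "ideal (colon_submod R M N g) R"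
proof (rule idealI_cring)
  show "colon_submod R M N g \<subseteq> carrier R" unfolding colon_submod_def by blast
  show "\<zero> \<in> colon_submod R M N g" unfolding colon_submod_def using g submoduleD(2)[OF N] by simp
  show "x \<oplus> y \<in> colon_submod R M N g" if "x \<in> colon_submod R M N g" "y \<in> colon_submod R M N g" for x y
    using that g submoduleD(5)[OF N] unfolding colon_submod_def by (simp add: smult_l_distr)
  show "r \<otimes> x \<in> colon_submod R M N g" if "r \<in> carrier R" "x \<in> colon_submod R M N g" for r x
    using that g submoduleD(4)[OF N] unfolding colon_submod_def by (simp add: smult_assoc1)
qed

context
  fixes H assumes H: "submodule H R M"
begin

interpretation H: abelian_subgroup H M by (rule submodule_abelian_subgroup[OF H])

lemma rcos_eq_iff: "x \<in> carrier M \<Longrightarrow> y \<in> carrier M \<Longrightarrow> H +>\<^bsub>M\<^esub> x = H +>\<^bsub>M\<^esub> y \<longleftrightarrow> x \<ominus>\<^bsub>M\<^esub> y \<in> H"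
  using H.a_rcos_module_imp[of y x] H.a_rcos_module_rev[of y x] H.a_rcos_self[of x]
    H.a_repr_independence'[of x y] by (auto simp: M.minus_eq)

lemma rcos_eq_self_iff:
  assumes x: "x \<in> carrier M"
  shows "H +>\<^bsub>M\<^esub> x = H \<longleftrightarrow> x \<in> H"
proof -
  have "x \<ominus>\<^bsub>M\<^esub> \<zero>\<^bsub>M\<^esub> = x" using M.add_minus_cancel_right[of x "\<zero>\<^bsub>M\<^esub>"] x by simp
  then show ?thesis using rcos_eq_iff[OF x M.zero_closed] H.a_rcos_const[OF submoduleD(2)[OF H]] by simp
qed

lemma rcos_add: "x \<in> carrier M \<Longrightarrow> y \<in> carrier M \<Longrightarrow> (H +>\<^bsub>M\<^esub> x) <+>\<^bsub>M\<^esub> (H +>\<^bsub>M\<^esub> y) = H +>\<^bsub>M\<^esub> (x \<oplus>\<^bsub>M\<^esub> y)"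
  by (rule H.a_rcos_sum)

lemma rcos_smult_rep:
  assumes x: "x \<in> carrier M" and t: "t \<in> carrier R"
  shows "H +>\<^bsub>M\<^esub> (t \<odot>\<^bsub>M\<^esub> rep (H +>\<^bsub>M\<^esub> x)) = H +>\<^bsub>M\<^esub> (t \<odot>\<^bsub>M\<^esub> x)"
proof -
  have r: "rep (H +>\<^bsub>M\<^esub> x) \<in> H +>\<^bsub>M\<^esub> x" using rep_mem[OF H.a_rcos_self[OF x]] .
  have rc: "rep (H +>\<^bsub>M\<^esub> x) \<in> carrier M" using H.a_elemrcos_carrier[OF x r] .
  have "rep (H +>\<^bsub>M\<^esub> x) \<ominus>\<^bsub>M\<^esub> x \<in> H" using H.a_rcos_module_imp[OF x r] by (simp add: M.minus_eq)
  then have "t \<odot>\<^bsub>M\<^esub> (rep (H +>\<^bsub>M\<^esub> x) \<ominus>\<^bsub>M\<^esub> x) \<in> H" using submoduleD(4)[OF H t] by blast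
  then show ?thesis
    using rcos_eq_iff rc x t by (simp add: M.minus_eq smult_r_distr smult_r_minus)
qed

end

end

context plain_module
begin

context
  fixes N N' g assumes N: "submodule N R M" and gen: "generates_mod R M N N' g"
begin

lemma generates_mod_carrier: "g \<in> carrier M"
  using gen unfolding generates_mod_def by blast

lemma generates_mod_quot_carrier:
  "carrier (quot_mod R (M\<lparr>carrier := N'\<rparr>) N) = {N +>\<^bsub>M\<^esub> (r \<odot>\<^bsub>M\<^esub> g) | r. r \<in> carrier R}"
  unfolding quot_mod_carrier
proof (intro equalityI subsetI)
  have g: "g \<in> carrier M" and N': "N' = N <+>\<^bsub>M\<^esub> cyclic_submod R M g"
    using gen unfolding generates_mod_def by auto
  fix X
  assume "X \<in> (\<lambda>x. N +>\<^bsub>M\<^esub> x) ` N'"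
  then obtain n z where X: "X = N +>\<^bsub>M\<^esub> (n \<oplus>\<^bsub>M\<^esub> z)" "n \<in> N" "z \<in> cyclic_submod R M g"
    unfolding N' by (blast elim: set_add_memE)
  then obtain r where r: "r \<in> carrier R" "z = r \<odot>\<^bsub>M\<^esub> g" unfolding cyclic_submod_def by blast
  have "n \<in> carrier M" using X(2) submoduleD(1)[OF N] by blast
  then have "n \<oplus>\<^bsub>M\<^esub> r \<odot>\<^bsub>M\<^esub> g \<ominus>\<^bsub>M\<^esub> r \<odot>\<^bsub>M\<^esub> g \<in> N" using X(2) r g by (simp add: M.add_minus_cancel_right)
  then have "X = N +>\<^bsub>M\<^esub> (r \<odot>\<^bsub>M\<^esub> g)"
    using rcos_eq_iff[OF N] X(1) r \<open>n \<in> carrier M\<close> g by simp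
  then show "X \<in> {N +>\<^bsub>M\<^esub> (r \<odot>\<^bsub>M\<^esub> g) | r. r \<in> carrier R}" using r(1) by blast
next
  have g: "g \<in> carrier M" and N': "N' = N <+>\<^bsub>M\<^esub> cyclic_submod R M g"
    using gen unfolding generates_mod_def by auto
  fix X
  assume "X \<in> {N +>\<^bsub>M\<^esub> (r \<odot>\<^bsub>M\<^esub> g) | r. r \<in> carrier R}"
  then obtain r where r: "r \<in> carrier R" "X = N +>\<^bsub>M\<^esub> (r \<odot>\<^bsub>M\<^esub> g)" by blast
  have "r \<odot>\<^bsub>M\<^esub> g \<in> cyclic_submod R M g" unfolding cyclic_submod_def using r(1) by blast
  then have "r \<odot>\<^bsub>M\<^esub> g \<in> N'"
    unfolding N' using set_add_upper2[OF N submoduleD(1)[OF cyclic_submod_submodule[OF g]]] by blast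
  then show "X \<in> (\<lambda>x. N +>\<^bsub>M\<^esub> x) ` N'" using r(2) by blast
qed

lemma generates_mod_ann: "ann R (quot_mod R (M\<lparr>carrier := N'\<rparr>) N) = colon_submod R M N g"
proof -
  let ?Q = "quot_mod R (M\<lparr>carrier := N'\<rparr>) N"
  have g: "g \<in> carrier M" by (rule generates_mod_carrier)
  have smult: "r \<odot>\<^bsub>?Q\<^esub> (N +>\<^bsub>M\<^esub> x) = N +>\<^bsub>M\<^esub> (r \<odot>\<^bsub>M\<^esub> x)" if "r \<in> carrier R" "x \<in> carrier M" for r x
    using rcos_smult_rep[OF N that(2,1)] by (simp add: quot_mod_smult)
  have "r \<in> ann R ?Q \<longleftrightarrow> r \<in> colon_submod R M N g" if r: "r \<in> carrier R" for r
  proof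
    assume "r \<in> ann R ?Q"
    moreover have "N +>\<^bsub>M\<^esub> g \<in> carrier ?Q"
      unfolding generates_mod_quot_carrier using g by (auto intro!: exI[of _ \<one>])
    ultimately have "N +>\<^bsub>M\<^esub> (r \<odot>\<^bsub>M\<^esub> g) = N"
      unfolding ann_def quot_mod_zero using smult[OF r g] by auto
    then show "r \<in> colon_submod R M N g"
      using rcos_eq_self_iff[OF N] g r unfolding colon_submod_def by simp
  next
    assume "r \<in> colon_submod R M N g"
    then have rg: "r \<odot>\<^bsub>M\<^esub> g \<in> N" unfolding colon_submod_def by blast
    have "N +>\<^bsub>M\<^esub> (r \<odot>\<^bsub>M\<^esub> (s \<odot>\<^bsub>M\<^esub> g)) = N" if s: "s \<in> carrier R" for s
    proof -
      have "r \<odot>\<^bsub>M\<^esub> (s \<odot>\<^bsub>M\<^esub> g) = s \<odot>\<^bsub>M\<^esub> (r \<odot>\<^bsub>M\<^esub> g)" using s g r by (simp add: smult_assoc1[symmetric] m_comm)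
      then show ?thesis using rcos_eq_self_iff[OF N] submoduleD(4)[OF N s rg] g r s by simp
    qed
    then show "r \<in> ann R ?Q"
      unfolding ann_def generates_mod_quot_carrier quot_mod_zero using smult r g by auto
  qed
  then show ?thesis unfolding ann_def colon_submod_def by blast
qed

end

end

context plain_module
begin

lemma generates_mod_rcos_eq_iff:
  assumes N: "submodule N R M" and g: "g \<in> carrier M" and r: "r \<in> carrier R" "s \<in> carrier R"
  shows "N +>\<^bsub>M\<^esub> (r \<odot>\<^bsub>M\<^esub> g) = N +>\<^bsub>M\<^esub> (s \<odot>\<^bsub>M\<^esub> g) \<longleftrightarrow> r \<ominus> s \<in> colon_submod R M N g"
  using rcos_eq_iff[OF N] smult_l_diff[OF r g] r g unfolding colon_submod_def by simp

lemma cyclic_factor_generator: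
  assumes ser: "pc_series R M n Ms" and i: "i \<in> {1..n}" and cyc: "cyclic_mod R (factor R M Ms i)"
  obtains g where "generates_mod R M (Ms (i - 1)) (Ms i) g"
proof -
  let ?N = "Ms (i - 1)" and ?N' = "Ms i" and ?Q = "factor R M Ms i"
  have N: "submodule ?N R M" and N': "submodule ?N' R M"
    using ser i unfolding pc_series_def pure_sub_def by auto
  have NN': "?N \<subseteq> ?N'" using ser i unfolding pc_series_def by auto
  obtain G where G: "G \<in> carrier ?Q" "carrier ?Q = {r \<odot>\<^bsub>?Q\<^esub> G | r. r \<in> carrier R}"
    using cyc unfolding cyclic_mod_def by blast
  obtain x where x: "x \<in> ?N'" "G = ?N +>\<^bsub>M\<^esub> x" using G(1) unfolding factor_def quot_mod_carrier by blast
  have xc: "x \<in> carrier M" using x submoduleD(1)[OF N'] by blast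
  interpret N: abelian_subgroup ?N M by (rule submodule_abelian_subgroup[OF N])
  define g where "g = rep G"
  have gG: "g \<in> ?N +>\<^bsub>M\<^esub> x" unfolding g_def x(2) by (rule rep_mem[OF N.a_rcos_self[OF xc]])
  have gc: "g \<in> carrier M" using N.a_elemrcos_carrier[OF xc gG] .
  have "g \<ominus>\<^bsub>M\<^esub> x \<in> ?N" using N.a_rcos_module_imp[OF xc gG] by (simp add: M.minus_eq)
  then have gN': "g \<in> ?N'" using submodule_mem_if_minus_mem[OF N' gc] NN' x(1) by blast
  have carQ: "carrier ?Q = {?N +>\<^bsub>M\<^esub> (r \<odot>\<^bsub>M\<^esub> g) | r. r \<in> carrier R}"
    unfolding G(2) unfolding factor_def quot_mod_smult g_def ..
  have "?N' \<subseteq> ?N <+>\<^bsub>M\<^esub> cyclic_submod R M g"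
  proof
    fix y assume y: "y \<in> ?N'"
    have yc: "y \<in> carrier M" using y submoduleD(1)[OF N'] by blast
    have "?N +>\<^bsub>M\<^esub> y \<in> carrier ?Q" unfolding factor_def quot_mod_carrier using y by blast
    then obtain r where r: "r \<in> carrier R" "?N +>\<^bsub>M\<^esub> y = ?N +>\<^bsub>M\<^esub> (r \<odot>\<^bsub>M\<^esub> g)" unfolding carQ by blast
    have "y \<ominus>\<^bsub>M\<^esub> r \<odot>\<^bsub>M\<^esub> g \<in> ?N" using rcos_eq_iff[OF N yc] r gc by simp
    moreover have "r \<odot>\<^bsub>M\<^esub> g \<in> cyclic_submod R M g" unfolding cyclic_submod_def using r(1) by blast
    ultimately have "y \<ominus>\<^bsub>M\<^esub> r \<odot>\<^bsub>M\<^esub> g \<oplus>\<^bsub>M\<^esub> r \<odot>\<^bsub>M\<^esub> g \<in> ?N <+>\<^bsub>M\<^esub> cyclic_submod R M g"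
      by (rule set_add_memI)
    then show "y \<in> ?N <+>\<^bsub>M\<^esub> cyclic_submod R M g" using yc r gc by (simp add: M.minus_add_cancel)
  qed
  moreover have "?N <+>\<^bsub>M\<^esub> cyclic_submod R M g \<subseteq> ?N'"
    using set_add_least[OF N' NN' cyclic_submod_subset[OF N' gN']] .
  ultimately show thesis using that gc unfolding generates_mod_def by blast
qed

lemma one_notin_colon_submod:
  assumes N: "submodule N R M" and gen: "generates_mod R M N N' g" and NN': "N \<subset> N'"
  shows "\<one> \<notin> colon_submod R M N g"
proof
  assume "\<one> \<in> colon_submod R M N g"
  then have "g \<in> N" using gen unfolding colon_submod_def generates_mod_def by simp
  then show False using set_add_cyclic_eq_iff[OF N] gen NN' unfolding generates_mod_def by blast
qed

lemma rcos_map_if_colon_eq: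
  assumes N1: "submodule N1 R M" and g1: "g1 \<in> carrier M"
    and N2: "submodule N2 R M" and g2: "g2 \<in> carrier M"
    and colon: "colon_submod R M N1 g1 = colon_submod R M N2 g2"
  obtains f where "\<And>r. r \<in> carrier R \<Longrightarrow> f (N1 +>\<^bsub>M\<^esub> (r \<odot>\<^bsub>M\<^esub> g1)) = N2 +>\<^bsub>M\<^esub> (r \<odot>\<^bsub>M\<^esub> g2)"
proof -
  define f where "f X = N2 +>\<^bsub>M\<^esub> ((SOME r. r \<in> carrier R \<and> X = N1 +>\<^bsub>M\<^esub> (r \<odot>\<^bsub>M\<^esub> g1)) \<odot>\<^bsub>M\<^esub> g2)" for X
  have "f (N1 +>\<^bsub>M\<^esub> (r \<odot>\<^bsub>M\<^esub> g1)) = N2 +>\<^bsub>M\<^esub> (r \<odot>\<^bsub>M\<^esub> g2)" if r: "r \<in> carrier R" for r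
  proof -
    let ?r = "SOME r'. r' \<in> carrier R \<and> N1 +>\<^bsub>M\<^esub> (r \<odot>\<^bsub>M\<^esub> g1) = N1 +>\<^bsub>M\<^esub> (r' \<odot>\<^bsub>M\<^esub> g1)"
    have "?r \<in> carrier R \<and> N1 +>\<^bsub>M\<^esub> (r \<odot>\<^bsub>M\<^esub> g1) = N1 +>\<^bsub>M\<^esub> (?r \<odot>\<^bsub>M\<^esub> g1)"
      by (rule someI[of _ r]) (use r in simp)
    then show ?thesis
      unfolding f_def using generates_mod_rcos_eq_iff[OF N1 g1 r] generates_mod_rcos_eq_iff[OF N2 g2 r] colon
      by auto
  qed
  then show thesis by (rule that)
qed

lemma quot_mod_iso_if_colon_eq:
  assumes N1: "submodule N1 R M" and gen1: "generates_mod R M N1 N1' g1"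
    and N2: "submodule N2 R M" and gen2: "generates_mod R M N2 N2' g2"
    and colon: "colon_submod R M N1 g1 = colon_submod R M N2 g2"
  shows "mod_iso R (quot_mod R (M\<lparr>carrier := N1'\<rparr>) N1) (quot_mod R (M\<lparr>carrier := N2'\<rparr>) N2)"
proof -
  let ?Q1 = "quot_mod R (M\<lparr>carrier := N1'\<rparr>) N1" and ?Q2 = "quot_mod R (M\<lparr>carrier := N2'\<rparr>) N2"
  have g1: "g1 \<in> carrier M" and g2: "g2 \<in> carrier M"
    using gen1 gen2 unfolding generates_mod_def by auto
  note car1 = generates_mod_quot_carrier[OF N1 gen1] and car2 = generates_mod_quot_carrier[OF N2 gen2]
  have key: "N1 +>\<^bsub>M\<^esub> (r \<odot>\<^bsub>M\<^esub> g1) = N1 +>\<^bsub>M\<^esub> (s \<odot>\<^bsub>M\<^esub> g1) \<longleftrightarrow>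
      N2 +>\<^bsub>M\<^esub> (r \<odot>\<^bsub>M\<^esub> g2) = N2 +>\<^bsub>M\<^esub> (s \<odot>\<^bsub>M\<^esub> g2)" if "r \<in> carrier R" "s \<in> carrier R" for r s
    using generates_mod_rcos_eq_iff[OF N1 g1 that] generates_mod_rcos_eq_iff[OF N2 g2 that] colon by simp
  obtain f where f: "\<And>r. r \<in> carrier R \<Longrightarrow> f (N1 +>\<^bsub>M\<^esub> (r \<odot>\<^bsub>M\<^esub> g1)) = N2 +>\<^bsub>M\<^esub> (r \<odot>\<^bsub>M\<^esub> g2)"
    using rcos_map_if_colon_eq[OF N1 g1 N2 g2 colon] by blast
  show ?thesis
    unfolding mod_iso_def
  proof (intro exI conjI ballI)
    show "bij_betw f (carrier ?Q1) (carrier ?Q2)"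
    proof (rule bij_betw_imageI)
      show "inj_on f (carrier ?Q1)"
      proof (rule inj_onI)
        fix X Y assume "X \<in> carrier ?Q1" "Y \<in> carrier ?Q1" and e: "f X = f Y"
        then obtain r s where "r \<in> carrier R" "X = N1 +>\<^bsub>M\<^esub> (r \<odot>\<^bsub>M\<^esub> g1)"
          "s \<in> carrier R" "Y = N1 +>\<^bsub>M\<^esub> (s \<odot>\<^bsub>M\<^esub> g1)" unfolding car1 by blast
        then show "X = Y" using e f key by simp
      qed
      show "f ` carrier ?Q1 = carrier ?Q2" unfolding car1 car2 using f by blast
    qed
  next
    fix X Y assume "X \<in> carrier ?Q1" "Y \<in> carrier ?Q1"
    then obtain r s where rs: "r \<in> carrier R" "X = N1 +>\<^bsub>M\<^esub> (r \<odot>\<^bsub>M\<^esub> g1)"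
      "s \<in> carrier R" "Y = N1 +>\<^bsub>M\<^esub> (s \<odot>\<^bsub>M\<^esub> g1)" unfolding car1 by blast
    have "f (X \<oplus>\<^bsub>?Q1\<^esub> Y) = f (N1 +>\<^bsub>M\<^esub> ((r \<oplus> s) \<odot>\<^bsub>M\<^esub> g1))"
      using rs g1 by (simp add: quot_mod_add rcos_add[OF N1] smult_l_distr)
    also have "\<dots> = f X \<oplus>\<^bsub>?Q2\<^esub> f Y"
      using rs g2 f by (simp add: quot_mod_add rcos_add[OF N2] smult_l_distr)
    finally show "f (X \<oplus>\<^bsub>?Q1\<^esub> Y) = f X \<oplus>\<^bsub>?Q2\<^esub> f Y" .
  next
    fix t X assume t: "t \<in> carrier R" and "X \<in> carrier ?Q1"
    then obtain r where r: "r \<in> carrier R" "X = N1 +>\<^bsub>M\<^esub> (r \<odot>\<^bsub>M\<^esub> g1)" unfolding car1 by blast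
    have "f (t \<odot>\<^bsub>?Q1\<^esub> X) = f (N1 +>\<^bsub>M\<^esub> ((t \<otimes> r) \<odot>\<^bsub>M\<^esub> g1))"
      using r t g1 by (simp add: quot_mod_smult rcos_smult_rep[OF N1] smult_assoc1)
    also have "\<dots> = t \<odot>\<^bsub>?Q2\<^esub> f X"
      using r t g2 f by (simp add: quot_mod_smult rcos_smult_rep[OF N2] smult_assoc1)
    finally show "f (t \<odot>\<^bsub>?Q1\<^esub> X) = t \<odot>\<^bsub>?Q2\<^esub> f X" .
  qed
qed

end

section \<open>Totally ordered families\<close>

lemma chain_obtain_max:
  assumes "finite S" "S \<noteq> {}" and total: "\<forall>i\<in>S. \<forall>j\<in>S. A i \<subseteq> A j \<or> A j \<subseteq> A i"
  obtains k where "k \<in> S" "\<forall>i\<in>S. A i \<subseteq> A k"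
proof -
  obtain X where X: "X \<in> A ` S" "\<forall>Y\<in>A ` S. X \<subseteq> Y \<longrightarrow> X = Y"
    using finite_has_maximal[of "A ` S"] assms(1,2) by auto
  then obtain k where k: "k \<in> S" "X = A k" by blast
  have "A i \<subseteq> A k" if "i \<in> S" for i
    using total[rule_format, OF that k(1)] X(2)[rule_format, of "A i"] that k by auto
  then show thesis using that k(1) by blast
qed

lemma chain_obtain_min:
  assumes "finite S" "S \<noteq> {}" and total: "\<forall>i\<in>S. \<forall>j\<in>S. A i \<subseteq> A j \<or> A j \<subseteq> A i"
  obtains k where "k \<in> S" "\<forall>i\<in>S. A k \<subseteq> A i"
proof -
  obtain X where X: "X \<in> A ` S" "\<forall>Y\<in>A ` S. Y \<subseteq> X \<longrightarrow> X = Y"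
    using finite_has_minimal[of "A ` S"] assms(1,2) by auto
  then obtain k where k: "k \<in> S" "X = A k" by blast
  have "A k \<subseteq> A i" if "i \<in> S" for i
    using total[rule_format, OF that k(1)] X(2)[rule_format, of "A i"] that k by auto
  then show thesis using that k(1) by blast
qed

text \<open>The smallest member is the set of elements avoided by no member; remove it and induct.\<close>
lemma totally_ordered_families_match:
  assumes "finite I" "finite J" "card I = card J"
    "\<forall>i\<in>I. \<forall>j\<in>I. A i \<subseteq> A j \<or> A j \<subseteq> A i" "\<forall>i\<in>J. \<forall>j\<in>J. C i \<subseteq> C j \<or> C j \<subseteq> C i"
    "\<forall>i\<in>I. A i \<subseteq> K" "\<forall>j\<in>J. C j \<subseteq> K"
    "\<forall>a\<in>K. card {i\<in>I. a \<notin> A i} = card {j\<in>J. a \<notin> C j}"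
  shows "\<exists>\<sigma>. bij_betw \<sigma> I J \<and> (\<forall>i\<in>I. A i = C (\<sigma> i))"
  using assms
proof (induction "card I" arbitrary: I J)
  case 0
  then have "I = {}" "J = {}" by auto
  then show ?case by (auto simp: bij_betw_def)
next
  case (Suc c)
  have "I \<noteq> {}" "J \<noteq> {}" using Suc.hyps(2) Suc.prems(3) by auto
  then obtain k k' where k: "k \<in> I" "\<forall>i\<in>I. A k \<subseteq> A i" and k': "k' \<in> J" "\<forall>i\<in>J. C k' \<subseteq> C i"
    using chain_obtain_min[OF Suc.prems(1) _ Suc.prems(4)] chain_obtain_min[OF Suc.prems(2) _ Suc.prems(5)]
    by metis
  have "A k = {a \<in> K. card {i\<in>I. a \<notin> A i} = 0}" using k Suc.prems(1,6) by auto
  moreover have "C k' = {a \<in> K. card {j\<in>J. a \<notin> C j} = 0}" using k' Suc.prems(2,7) by auto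
  ultimately have AC: "A k = C k'" using Suc.prems(8) by auto
  have "card {i \<in> I - {k}. a \<notin> A i} = card {j \<in> J - {k'}. a \<notin> C j}" if "a \<in> K" for a
  proof -
    have "{i \<in> I - {k}. a \<notin> A i} = {i \<in> I. a \<notin> A i} - {k}" "{j \<in> J - {k'}. a \<notin> C j} = {j \<in> J. a \<notin> C j} - {k'}"
      by auto
    then show ?thesis using Suc.prems(1,2,8) that k(1) k'(1) AC by (simp add: card_Diff_singleton_if)
  qed
  moreover have "c = card (I - {k})" "card (I - {k}) = card (J - {k'})"
    using Suc.hyps(2) Suc.prems(1,2,3) k(1) k'(1) by auto
  ultimately obtain \<sigma> where \<sigma>: "bij_betw \<sigma> (I - {k}) (J - {k'})" "\<forall>i\<in>I - {k}. A i = C (\<sigma> i)"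
    using Suc.hyps(1)[of "I - {k}" "J - {k'}"] Suc.prems by auto
  define \<tau> where "\<tau> = \<sigma>(k := k')"
  have "bij_betw \<tau> (I - {k}) (J - {k'})"
    using \<sigma>(1) unfolding \<tau>_def by (rule bij_betw_cong[THEN iffD1, rotated]) auto
  moreover have "bij_betw \<tau> {k} {k'}" unfolding \<tau>_def by (simp add: bij_betw_def)
  ultimately have "bij_betw \<tau> ((I - {k}) \<union> {k}) ((J - {k'}) \<union> {k'})" by (rule bij_betw_combine) auto
  moreover have "(I - {k}) \<union> {k} = I" "(J - {k'}) \<union> {k'} = J" using k(1) k'(1) by auto
  moreover have "\<forall>i\<in>I. A i = C (\<tau> i)" using \<sigma>(2) AC unfolding \<tau>_def by auto
  ultimately show ?case by auto
qed

text \<open>Take \<open>P\<close> maximal above the largest \<open>(A\<^sub>i : a)\<close> with \<open>a \<notin> A\<^sub>i\<close>: then \<open>a \<notin> A\<^sub>i\<close>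
  iff \<open>(A\<^sub>i : a) \<subseteq> P\<close>.\<close>
lemma (in cring) card_notin_le_if_colon_counts:
  assumes I: "finite I" and chA: "\<forall>i\<in>I. \<forall>j\<in>I. A i \<subseteq> A j \<or> A j \<subseteq> A i"
    and idA: "\<forall>i\<in>I. ideal (A i) R" and finJ: "finite J"
    and counts: "\<And>P. maximalideal P R \<Longrightarrow>
       card {i\<in>I. colon_ideal R (A i) a \<subseteq> P} = card {j\<in>J. colon_ideal R (C j) a \<subseteq> P}"
    and a: "a \<in> carrier R"
  shows "card {i\<in>I. a \<notin> A i} \<le> card {j\<in>J. a \<notin> C j}"
proof (cases "{i\<in>I. a \<notin> A i} = {}")
  case True
  then show ?thesis by (metis card.empty zero_le)
next
  case False
  let ?S = "{i\<in>I. a \<notin> A i}"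
  obtain k where k: "k \<in> ?S" "\<forall>i\<in>?S. A i \<subseteq> A k"
    using chain_obtain_max[of ?S A] I False chA by auto
  have "ideal (colon_ideal R (A k) a) R" using colon_ideal_ideal idA k(1) a by blast
  moreover have "\<one> \<notin> colon_ideal R (A k) a" using k(1) a unfolding colon_ideal_def by simp
  ultimately obtain P where P: "maximalideal P R" "colon_ideal R (A k) a \<subseteq> P"
    by (rule exists_maximalideal_superset)
  have oneP: "\<one> \<notin> P" using maximalideal.I_notcarr[OF P(1)] ideal.one_imp_carrier[OF maximalideal.axioms(1)[OF P(1)]] by blast
  have notin_iff: "colon_ideal R X a \<subseteq> P \<Longrightarrow> a \<notin> X" for X
    using oneP a unfolding colon_ideal_def by auto
  have "?S = {i\<in>I. colon_ideal R (A i) a \<subseteq> P}"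
  proof (intro equalityI subsetI)
    fix i assume "i \<in> ?S"
    then have "colon_ideal R (A i) a \<subseteq> colon_ideal R (A k) a" using k unfolding colon_ideal_def by auto
    then show "i \<in> {i\<in>I. colon_ideal R (A i) a \<subseteq> P}" using \<open>i \<in> ?S\<close> P(2) by auto
  qed (use notin_iff in blast)
  also have "card \<dots> = card {j\<in>J. colon_ideal R (C j) a \<subseteq> P}" by (rule counts[OF P(1)])
  also have "\<dots> \<le> card {j\<in>J. a \<notin> C j}" using finJ notin_iff by (intro card_mono) auto
  finally show ?thesis .
qed

section \<open>Pure-composition series\<close>

context plain_module
begin

lemma scaled_submod_step:
  assumes P: "maximalideal P R" and a: "a \<in> carrier R"
    and N: "pure_sub R M N" and N': "pure_sub R M N'" and gen: "generates_mod R M N N' g"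
  shows "scaled_submod R M a P N' = scaled_submod R M a P N \<or>
      L.covers (scaled_submod R M a P N) (scaled_submod R M a P N')"
    and "scaled_submod R M a P N \<noteq> scaled_submod R M a P N' \<longleftrightarrow> colon_ideal R (colon_submod R M N g) a \<subseteq> P"
proof -
  interpret P: maximalideal P R by fact
  let ?T = "scaled_submod R M a P N"
  have Ns: "submodule N R M" using N unfolding pure_sub_def by blast
  have g: "g \<in> carrier M" and N'_eq: "N' = N <+>\<^bsub>M\<^esub> cyclic_submod R M g"
    using gen unfolding generates_mod_def by auto
  have ag: "a \<odot>\<^bsub>M\<^esub> g \<in> carrier M" using a g by simp
  have T: "submodule ?T R M" using scaled_submod_submodule[OF P.is_ideal a Ns] .
  have eq: "scaled_submod R M a P N' = ?T <+>\<^bsub>M\<^esub> cyclic_submod R M (a \<odot>\<^bsub>M\<^esub> g)"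
    unfolding N'_eq by (rule scaled_submod_set_add_cyclic[OF P.is_ideal a Ns g])
  show "scaled_submod R M a P N' = ?T \<or> L.covers ?T (scaled_submod R M a P N')"
    unfolding eq using set_add_cyclic_covers[OF P T ag] scaled_submod_annihilated[OF P.is_ideal a Ns g] by blast
  have "?T \<noteq> scaled_submod R M a P N' \<longleftrightarrow> a \<odot>\<^bsub>M\<^esub> g \<notin> ?T"
    unfolding eq using set_add_cyclic_eq_iff[OF T ag] by auto
  also have "\<dots> \<longleftrightarrow> colon_ideal R (colon_submod R M N g) a \<subseteq> P"
  proof
    assume notin: "a \<odot>\<^bsub>M\<^esub> g \<notin> ?T"
    show "colon_ideal R (colon_submod R M N g) a \<subseteq> P"
    proof
      fix r assume "r \<in> colon_ideal R (colon_submod R M N g) a"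
      then have r: "r \<in> carrier R" "(r \<otimes> a) \<odot>\<^bsub>M\<^esub> g \<in> N"
        unfolding colon_ideal_def colon_submod_def by auto
      show "r \<in> P" using smult_mem_scaled_submodI[OF P a N g r(1) _ r(2)] notin by blast
    qed
  next
    assume sub: "colon_ideal R (colon_submod R M N g) a \<subseteq> P"
    show "a \<odot>\<^bsub>M\<^esub> g \<notin> ?T"
    proof
      assume "a \<odot>\<^bsub>M\<^esub> g \<in> ?T"
      then obtain r where "r \<in> carrier R" "r \<notin> P" "(r \<otimes> a) \<odot>\<^bsub>M\<^esub> g \<in> N"
        using smult_mem_scaled_submodD[OF P a Ns g] N' N'_eq by blast
      then show False using sub a unfolding colon_ideal_def colon_submod_def by auto
    qed
  qed
  finally show "?T \<noteq> scaled_submod R M a P N' \<longleftrightarrow> colon_ideal R (colon_submod R M N g) a \<subseteq> P" .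
qed

context
  fixes n Ms gs
  assumes ser: "pc_series R M n Ms"
    and gens: "\<forall>i\<in>{1..n}. generates_mod R M (Ms (i - 1)) (Ms i) (gs i)"
begin

lemma pc_series_submodule: "i \<le> n \<Longrightarrow> submodule (Ms i) R M"
  using ser unfolding pc_series_def pure_sub_def by blast

lemma pc_series_factor_generator:
  assumes i: "i \<in> {1..n}"
  shows "submodule (Ms (i - 1)) R M" "generates_mod R M (Ms (i - 1)) (Ms i) (gs i)" "gs i \<in> carrier M"
  using pc_series_submodule[of "i - 1"] gens i unfolding generates_mod_def by auto

lemma pc_series_ann_factor:
  assumes i: "i \<in> {1..n}"
  shows "ann R (factor R M Ms i) = colon_submod R M (Ms (i - 1)) (gs i)"
  unfolding factor_def using generates_mod_ann pc_series_factor_generator[OF i] by blast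

lemma pc_series_ann_factor_ideal: "i \<in> {1..n} \<Longrightarrow> ideal (ann R (factor R M Ms i)) R"
  using colon_submod_ideal pc_series_factor_generator pc_series_ann_factor by simp

lemma pc_series_one_notin_ann_factor:
  assumes i: "i \<in> {1..n}"
  shows "\<one> \<notin> ann R (factor R M Ms i)"
proof -
  have "Ms (i - 1) \<subset> Ms i" using ser i unfolding pc_series_def by blast
  then show ?thesis
    using one_notin_colon_submod pc_series_factor_generator[OF i] pc_series_ann_factor[OF i] by simp
qed

lemma pc_series_scaled_jumps:
  assumes P: "maximalideal P R" and a: "a \<in> carrier R"
  shows "L.cover_chain (\<lambda>i. scaled_submod R M a P (Ms i)) n"
    and "L.jumps (\<lambda>i. scaled_submod R M a P (Ms i)) n =
      card {i \<in> {1..n}. colon_ideal R (ann R (factor R M Ms i)) a \<subseteq> P}"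
proof -
  let ?T = "\<lambda>i. scaled_submod R M a P (Ms i)"
  let ?Q = "\<lambda>i. colon_ideal R (ann R (factor R M Ms i)) a \<subseteq> P"
  have pure: "\<And>i. i \<le> n \<Longrightarrow> pure_sub R M (Ms i)" using ser unfolding pc_series_def by blast
  have step: "(?T (Suc i) = ?T i \<or> L.covers (?T i) (?T (Suc i))) \<and> (?T i \<noteq> ?T (Suc i) \<longleftrightarrow> ?Q (Suc i))"
    if "i < n" for i
  proof -
    have i: "Suc i \<in> {1..n}" using that by simp
    have "pure_sub R M (Ms i)" "pure_sub R M (Ms (Suc i))" using pure that by auto
    then show ?thesis
      using scaled_submod_step[OF P a _ _ pc_series_factor_generator(2)[OF i]] pc_series_ann_factor[OF i] by simp
  qed
  show "L.cover_chain ?T n"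
    unfolding L.cover_chain_def
    using step scaled_submod_submodule[OF maximalideal.axioms(1)[OF P] a pc_series_submodule] by auto
  have "L.jumps ?T n = card {i. i < n \<and> ?Q (Suc i)}" unfolding L.jumps_def using step by metis
  also have "\<dots> = card (Suc ` {i. i < n \<and> ?Q (Suc i)})" by (simp add: card_image)
  also have "Suc ` {i. i < n \<and> ?Q (Suc i)} = {i \<in> {1..n}. ?Q i}"
  proof (intro equalityI subsetI)
    fix i assume "i \<in> {i \<in> {1..n}. ?Q i}"
    then have "i = Suc (i - 1)" "i - 1 \<in> {i. i < n \<and> ?Q (Suc i)}" by auto
    then show "i \<in> Suc ` {i. i < n \<and> ?Q (Suc i)}" by (rule image_eqI)
  qed auto
  finally show "L.jumps ?T n = card {i \<in> {1..n}. ?Q i}" .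
qed

end

lemma pc_series_generators:
  assumes ser: "pc_series R M n Ms" and cyc: "\<forall>i\<in>{1..n}. cyclic_mod R (factor R M Ms i)"
  obtains gs where "\<forall>i\<in>{1..n}. generates_mod R M (Ms (i - 1)) (Ms i) (gs i)"
proof -
  have "\<forall>i\<in>{1..n}. \<exists>g. generates_mod R M (Ms (i - 1)) (Ms i) g"
    using cyclic_factor_generator[OF ser] cyc by metis
  then show thesis using that by (metis bchoice)
qed

lemma pc_series_colon_counts_eq:
  assumes ser1: "pc_series R M n Ms" and cyc1: "\<forall>i\<in>{1..n}. cyclic_mod R (factor R M Ms i)"
    and ser2: "pc_series R M m Ns" and cyc2: "\<forall>j\<in>{1..m}. cyclic_mod R (factor R M Ns j)"
    and P: "maximalideal P R" and a: "a \<in> carrier R"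
  shows "card {i \<in> {1..n}. colon_ideal R (ann R (factor R M Ms i)) a \<subseteq> P} =
    card {j \<in> {1..m}. colon_ideal R (ann R (factor R M Ns j)) a \<subseteq> P}"
proof -
  obtain gs hs where gs: "\<forall>i\<in>{1..n}. generates_mod R M (Ms (i - 1)) (Ms i) (gs i)"
    and hs: "\<forall>j\<in>{1..m}. generates_mod R M (Ns (j - 1)) (Ns j) (hs j)"
    using pc_series_generators[OF ser1 cyc1] pc_series_generators[OF ser2 cyc2] by metis
  note J1 = pc_series_scaled_jumps[OF ser1 gs P a] and J2 = pc_series_scaled_jumps[OF ser2 hs P a]
  have "Ms 0 = Ns 0" "Ms n = Ns m" using ser1 ser2 unfolding pc_series_def by auto
  then show ?thesis using L.jordan_hoelder_jumps[OF J1(1) J2(1)] J1(2) J2(2) by simp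
qed

end

context plain_module
begin

context
  fixes n m Ms Ns
  assumes ser1: "pc_series R M n Ms" and cyc1: "\<forall>i\<in>{1..n}. cyclic_mod R (factor R M Ms i)"
    and ser2: "pc_series R M m Ns" and cyc2: "\<forall>j\<in>{1..m}. cyclic_mod R (factor R M Ns j)"
begin

lemma pc_series_card_notin_ann_le:
  assumes tot1: "ann_tot_ordered R M n Ms" and a: "a \<in> carrier R"
  shows "card {i \<in> {1..n}. a \<notin> ann R (factor R M Ms i)} \<le> card {j \<in> {1..m}. a \<notin> ann R (factor R M Ns j)}"
proof (rule card_notin_le_if_colon_counts)
  obtain gs where "\<forall>i\<in>{1..n}. generates_mod R M (Ms (i - 1)) (Ms i) (gs i)"
    using pc_series_generators[OF ser1 cyc1] by blast
  then show "\<forall>i\<in>{1..n}. ideal (ann R (factor R M Ms i)) R" using pc_series_ann_factor_ideal[OF ser1] by blast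
  show "\<forall>i\<in>{1..n}. \<forall>j\<in>{1..n}. ann R (factor R M Ms i) \<subseteq> ann R (factor R M Ms j) \<or>
      ann R (factor R M Ms j) \<subseteq> ann R (factor R M Ms i)"
    using tot1 unfolding ann_tot_ordered_def .
  show "card {i \<in> {1..n}. colon_ideal R (ann R (factor R M Ms i)) a \<subseteq> P} =
      card {j \<in> {1..m}. colon_ideal R (ann R (factor R M Ns j)) a \<subseteq> P}" if "maximalideal P R" for P
    by (rule pc_series_colon_counts_eq[OF ser1 cyc1 ser2 cyc2 that a])
qed (use a in auto)

lemma pc_series_factor_iso_if_ann_eq:
  assumes i: "i \<in> {1..n}" and j: "j \<in> {1..m}"
    and eq: "ann R (factor R M Ms i) = ann R (factor R M Ns j)"
  shows "mod_iso R (factor R M Ms i) (factor R M Ns j)"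
proof -
  obtain gs hs where gs: "\<forall>i\<in>{1..n}. generates_mod R M (Ms (i - 1)) (Ms i) (gs i)"
    and hs: "\<forall>j\<in>{1..m}. generates_mod R M (Ns (j - 1)) (Ns j) (hs j)"
    using pc_series_generators[OF ser1 cyc1] pc_series_generators[OF ser2 cyc2] by metis
  note G1 = pc_series_factor_generator[OF ser1 gs i] and G2 = pc_series_factor_generator[OF ser2 hs j]
  show ?thesis unfolding factor_def
    using quot_mod_iso_if_colon_eq[OF G1(1,2) G2(1,2)] eq
      pc_series_ann_factor[OF ser1 gs i] pc_series_ann_factor[OF ser2 hs j] by simp
qed

end

theorem pc_series_iso:
  assumes ser1: "pc_series R M n Ms" and cyc1: "\<forall>i\<in>{1..n}. cyclic_mod R (factor R M Ms i)"
    and tot1: "ann_tot_ordered R M n Ms"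
    and ser2: "pc_series R M m Ns" and cyc2: "\<forall>j\<in>{1..m}. cyclic_mod R (factor R M Ns j)"
    and tot2: "ann_tot_ordered R M m Ns"
  shows "series_iso R M n Ms m Ns"
proof -
  let ?A = "\<lambda>i. ann R (factor R M Ms i)" and ?C = "\<lambda>j. ann R (factor R M Ns j)"
  have notin: "card {i \<in> {1..n}. a \<notin> ?A i} = card {j \<in> {1..m}. a \<notin> ?C j}" if a: "a \<in> carrier R" for a
    using le_antisym[OF pc_series_card_notin_ann_le[OF ser1 cyc1 ser2 cyc2 tot1 a]
        pc_series_card_notin_ann_le[OF ser2 cyc2 ser1 cyc1 tot2 a]] .
  obtain gs hs where gs: "\<forall>i\<in>{1..n}. generates_mod R M (Ms (i - 1)) (Ms i) (gs i)"
    and hs: "\<forall>j\<in>{1..m}. generates_mod R M (Ns (j - 1)) (Ns j) (hs j)"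
    using pc_series_generators[OF ser1 cyc1] pc_series_generators[OF ser2 cyc2] by metis
  have "{i \<in> {1..n}. \<one> \<notin> ?A i} = {1..n}" "{j \<in> {1..m}. \<one> \<notin> ?C j} = {1..m}"
    using pc_series_one_notin_ann_factor[OF ser1 gs] pc_series_one_notin_ann_factor[OF ser2 hs] by auto
  then have "card {1..n} = card {1..m}" using notin[OF one_closed] by simp
  have "\<exists>\<sigma>. bij_betw \<sigma> {1..n} {1..m} \<and> (\<forall>i\<in>{1..n}. ?A i = ?C (\<sigma> i))"
  proof (rule totally_ordered_families_match[where K = "carrier R"])
    show "card {1..n} = card {1..m}" by fact
    show "\<forall>i\<in>{1..n}. \<forall>j\<in>{1..n}. ?A i \<subseteq> ?A j \<or> ?A j \<subseteq> ?A i"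
      using tot1 unfolding ann_tot_ordered_def .
    show "\<forall>i\<in>{1..m}. \<forall>j\<in>{1..m}. ?C i \<subseteq> ?C j \<or> ?C j \<subseteq> ?C i"
      using tot2 unfolding ann_tot_ordered_def .
    show "\<forall>i\<in>{1..n}. ?A i \<subseteq> carrier R" "\<forall>j\<in>{1..m}. ?C j \<subseteq> carrier R"
      unfolding ann_def by blast+
    show "\<forall>a\<in>carrier R. card {i \<in> {1..n}. a \<notin> ?A i} = card {j \<in> {1..m}. a \<notin> ?C j}"
      using notin by blast
  qed simp_all
  then obtain \<sigma> where \<sigma>: "bij_betw \<sigma> {1..n} {1..m}" "\<forall>i\<in>{1..n}. ?A i = ?C (\<sigma> i)" by blast
  show ?thesis
    unfolding series_iso_def
  proof (intro exI conjI ballI)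
    show "bij_betw \<sigma> {1..n} {1..m}" by (rule \<sigma>(1))
    fix i assume i: "i \<in> {1..n}"
    show "mod_iso R (factor R M Ms i) (factor R M Ns (\<sigma> i))"
      using pc_series_factor_iso_if_ann_eq[OF ser1 cyc1 ser2 cyc2 i bij_betw_apply[OF \<sigma>(1) i]] \<sigma>(2) i by blast
  qed
qed

end

theorem theorem1p5:
  fixes R :: "'r ring" and M :: "('r, 'a) module"
    and n m :: nat and Ms Ns :: "nat \<Rightarrow> 'a set"
  assumes "cring R" and "arithmetic R"
    and "module R M" and "fin_gen R M"
    and "pc_series R M n Ms" and "\<forall>i\<in>{1..n}. cyclic_mod R (factor R M Ms i)"
    and "ann_tot_ordered R M n Ms"
    and "pc_series R M m Ns" and "\<forall>j\<in>{1..m}. cyclic_mod R (factor R M Ns j)"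
    and "ann_tot_ordered R M m Ns"
  shows "series_iso R M n Ms m Ns"
proof -
  interpret plain_module R M unfolding plain_module_def by fact
  show ?thesis by (rule pc_series_iso[OF assms(5-10)])
qed

end
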